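(* Let $\tau\in\mathbb{D}$ and let $F=\{\sigma_1,\dots,\sigma_n\}\subset\partial\mathbb{D}$ consist of pairwise distinct points. (A) For every $\varphi\in\mathfrak{U}_\tau[F]$ there exists a single-valued holomorphic branch $\Psi[\varphi]:\mathbb{D}\to\mathbb{C}$ of $\log\big((\varphi(z)-\tau)/(z-\tau)\big)$ whose angular limit at $\sigma_k$ equals $0$ for each $k=1,\dots,n$. (B) Let $I\subset\mathbb{R}$ be an interval and $(\varphi_t)_{t\in I}\subset\mathfrak{U}_\tau[F]$ a family such that $t\mapsto\varphi_t(z)$ is continuous for every $z\in\mathbb{D}$. Suppose that, for some $k_0\in\{1,\dots,n\}$, the function $t\mapsto\varphi_t'(\sigma_{k_0})$ is locally bounded on $I$. Then $I\ni t\mapsto\Psi[\varphi_t]\in\mathsf{Hol}(\mathbb{D})$ is continuous with respect to the topology of locally uniform convergence.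
   Context: $\mathbb{D}$ is the open unit disk. $\mathfrak{U}_\tau$ consists of $\mathrm{id}_{\mathbb{D}}$ together with all univalent holomorphic self-maps $\varphi\ne\mathrm{id}_{\mathbb{D}}$ of $\mathbb{D}$ whose Denjoy–Wolff point is $\tau$; for $\tau\in\mathbb{D}$ this means $\varphi(\tau)=\tau$. $\mathfrak{U}_\tau[F]$ is the set of $\varphi\in\mathfrak{U}_\tau$ such that each $\sigma\in F$ is a boundary regular fixed point of $\varphi$: the angular limit of $\varphi$ at $\sigma$ equals $\sigma$, and the angular derivative $\varphi'(\sigma)$ exists finitely. *)

theory Defs
  imports "HOL-Analysis.Analysis"
begin

text \<open>The unit disk is \<open>ball 0 1\<close>; its boundary is \<open>sphere 0 1\<close>.\<close>

definition stolz :: "complex \<Rightarrow> real \<Rightarrow> complex set" where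
  "stolz \<sigma> C = {z. cmod z < 1 \<and> cmod (\<sigma> - z) < C * (1 - cmod z)}"

definition has_angular_limit :: "(complex \<Rightarrow> complex) \<Rightarrow> complex \<Rightarrow> complex \<Rightarrow> bool" where
  "has_angular_limit f \<sigma> L \<longleftrightarrow> (\<forall>C>1. (f \<longlongrightarrow> L) (at \<sigma> within stolz \<sigma> C))"

definition has_angular_deriv :: "(complex \<Rightarrow> complex) \<Rightarrow> complex \<Rightarrow> complex \<Rightarrow> bool" where
  "has_angular_deriv f \<sigma> D \<longleftrightarrow>
     (\<exists>L. has_angular_limit f \<sigma> L \<and> has_angular_limit (\<lambda>z. (f z - L) / (z - \<sigma>)) \<sigma> D)"

definition angular_deriv :: "(complex \<Rightarrow> complex) \<Rightarrow> complex \<Rightarrow> complex" where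
  "angular_deriv f \<sigma> = (THE D. has_angular_deriv f \<sigma> D)"

definition boundary_regular_fixpoint :: "(complex \<Rightarrow> complex) \<Rightarrow> complex \<Rightarrow> bool" where
  "boundary_regular_fixpoint \<phi> \<sigma> \<longleftrightarrow>
     has_angular_limit \<phi> \<sigma> \<sigma> \<and> (\<exists>D. has_angular_deriv \<phi> \<sigma> D)"

definition univalent_selfmap :: "(complex \<Rightarrow> complex) \<Rightarrow> bool" where
  "univalent_selfmap \<phi> \<longleftrightarrow> \<phi> holomorphic_on ball 0 1 \<and> inj_on \<phi> (ball 0 1)
     \<and> \<phi> ` ball 0 1 \<subseteq> ball 0 1"

text \<open>Maps are identified with their restrictions to the disk.\<close>
definition U_int :: "complex \<Rightarrow> (complex \<Rightarrow> complex) set" where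
  "U_int \<tau> = {\<phi>. univalent_selfmap \<phi> \<and> ((\<forall>z\<in>ball 0 1. \<phi> z = z) \<or> \<phi> \<tau> = \<tau>)}"

definition U_int_F :: "complex \<Rightarrow> complex set \<Rightarrow> (complex \<Rightarrow> complex) set" where
  "U_int_F \<tau> F = {\<phi> \<in> U_int \<tau>. \<forall>\<sigma>\<in>F. boundary_regular_fixpoint \<phi> \<sigma>}"

definition is_log_branch :: "complex \<Rightarrow> (complex \<Rightarrow> complex) \<Rightarrow> (complex \<Rightarrow> complex) \<Rightarrow> bool" where
  "is_log_branch \<tau> \<phi> \<Psi> \<longleftrightarrow> \<Psi> holomorphic_on ball 0 1 \<and>
     (\<forall>z\<in>ball 0 1 - {\<tau>}. exp (\<Psi> z) = (\<phi> z - \<tau>) / (z - \<tau>))"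

end

(*
  (A) Since \<phi> is univalent, the difference quotient Q(z, w) = (\<phi> z - \<phi> w) / (z - w) has no zeros
  on the bidisc and therefore a continuous logarithm L there.  As \<phi> fixes the points of F, the
  angular limits of L(-, \<tau>) at them lie in 2\<pi>i\<int>; it suffices to show that they coincide, for
  then \<Psi> = L(-, \<tau>) - c works.  Given two such points \<sigma> \<noteq> \<sigma>', Q(z, w) tends to
  (\<sigma> - \<sigma>') / (\<sigma> - \<sigma>') = 1 as (z, w) tends to (\<sigma>, \<sigma>') inside a product of Stolz angles, so there
  L = 2\<pi>in + Ln Q for a single n.  On the other hand the limit of L(z, w\<^sub>0) as z tends to \<sigma> is
  obtained from that of L(z, \<tau>) by moving w from \<tau> to w\<^sub>0 along a segment.  Comparing the two
  descriptions at w\<^sub>0 near \<sigma>' (and symmetrically near \<sigma>) identifies both limits with 2\<pi>in.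

  (B) Julia's lemma bounds |\<sigma>\<^sub>0 - \<phi>\<^sub>t(r \<sigma>\<^sub>0)| by the angular derivative at \<sigma>\<^sub>0, uniformly for t near
  t\<^sub>0.  Hence at one point z\<^sub>s on the radius to \<sigma>\<^sub>0 all quotients (\<phi>\<^sub>t z\<^sub>s - \<tau>) / (z\<^sub>s - \<tau>) are close to 1
  and every \<Psi>\<^sub>t is the principal logarithm there, so \<Psi>\<^sub>t(z\<^sub>s) \<rightarrow> \<Psi>\<^sub>t\<^sub>0(z\<^sub>s).  The maps \<phi>\<^sub>t are bounded,
  so they converge locally uniformly; by the maximum principle exp(\<Psi>\<^sub>t - \<Psi>\<^sub>t\<^sub>0) \<rightarrow> 1 locally
  uniformly, and the value at z\<^sub>s excludes jumps by multiples of 2\<pi>i.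
*)

theory Submission
  imports Defs "HOL-Complex_Analysis.Complex_Analysis"
begin

section \<open>Continuous logarithms\<close>

lemma exp_eq_obtain:
  fixes w z :: complex
  assumes "exp w = exp z"
  obtains n :: int where "w = z + 2 * pi * \<i> * of_int n"
proof -
  from assms obtain n :: int where "w = z + of_int (2 * n) * pi * \<i>"
    unfolding exp_eq by blast
  then show ?thesis
    using that[of n] by (simp add: algebra_simps)
qed

lemma exp_eq_imp_eq_if_close:
  fixes w z :: complex
  assumes "exp w = exp z" and "norm (w - z) < 2 * pi"
  shows "w = z"
proof -
  obtain n :: int where n: "w = z + 2 * pi * \<i> * of_int n"
    using assms(1) by (rule exp_eq_obtain)
  then have "2 * pi * \<bar>real_of_int n\<bar> < 2 * pi"
    using assms(2) by (simp add: norm_mult)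
  then have "n = 0" by simp
  then show ?thesis using n by simp
qed

lemma continuous_logs_differ_by_constant:
  fixes f g :: "'a::topological_space \<Rightarrow> complex"
  assumes S: "connected S" and f: "continuous_on S f" and g: "continuous_on S g"
    and exp_eq: "\<And>x. x \<in> S \<Longrightarrow> exp (f x) = exp (g x)"
  obtains n :: int where "\<And>x. x \<in> S \<Longrightarrow> f x - g x = 2 * pi * \<i> * of_int n"
proof (cases "S = {}")
  case False
  then obtain x0 where x0: "x0 \<in> S" by auto
  have "(\<lambda>x. f x - g x) constant_on S"
  proof (rule continuous_discrete_range_constant[OF S])
    show "continuous_on S (\<lambda>x. f x - g x)"
      using f g by (intro continuous_intros)
    fix x assume x: "x \<in> S"
    show "\<exists>e>0. \<forall>y. y \<in> S \<and> f y - g y \<noteq> f x - g x \<longrightarrow> e \<le> norm ((f y - g y) - (f x - g x))"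
    proof (intro exI[of _ "2 * pi"] conjI allI impI)
      fix y assume y: "y \<in> S \<and> f y - g y \<noteq> f x - g x"
      have "exp (f y - g y) = exp (f x - g x)"
        using exp_eq[of x] exp_eq[of y] x y by (simp add: exp_diff)
      then show "2 * pi \<le> norm ((f y - g y) - (f x - g x))"
        using exp_eq_imp_eq_if_close y by fastforce
    qed simp
  qed
  then have const: "f x - g x = f x0 - g x0" if "x \<in> S" for x
    using that x0 by (auto simp: constant_on_def)
  obtain n :: int where "f x0 = g x0 + 2 * pi * \<i> * of_int n"
    using exp_eq[OF x0] by (rule exp_eq_obtain)
  with const show ?thesis
    using that[of n] by (simp add: algebra_simps)
qed simp

lemma not_nonpos_Reals_if_near_1:
  fixes w :: complex
  assumes "norm (w - 1) < 1"
  shows "w \<notin> \<real>\<^sub>\<le>\<^sub>0"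
  using abs_Re_le_cmod[of "w - 1"] assms by (auto simp: complex_nonpos_Reals_iff)

lemma continuous_log_eq_Ln_near:
  fixes f :: "'a::real_normed_vector \<Rightarrow> complex"
  assumes W: "convex W" and a: "a \<notin> W" and f: "continuous_on W f"
    and lim: "((\<lambda>x. exp (f x)) \<longlongrightarrow> 1) (at a within W)"
  obtains \<delta> and n :: int where "\<delta> > 0"
    and "\<And>x. x \<in> W \<Longrightarrow> dist x a < \<delta> \<Longrightarrow> f x - Ln (exp (f x)) = 2 * pi * \<i> * of_int n"
proof -
  have "\<forall>\<^sub>F x in at a within W. dist (exp (f x)) 1 < 1"
    using tendstoD[OF lim] by simp
  then obtain \<delta> where \<delta>: "\<delta> > 0"
    and near: "\<And>x. x \<in> W \<Longrightarrow> x \<noteq> a \<Longrightarrow> dist x a < \<delta> \<Longrightarrow> dist (exp (f x)) 1 < 1"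
    unfolding eventually_at by blast
  define V where "V = W \<inter> ball a \<delta>"
  have near_V: "cmod (exp (f x) - 1) < 1" if "x \<in> V" for x
    using near[of x] that a unfolding V_def by (auto simp: dist_norm norm_minus_commute)
  have f_V: "continuous_on V f"
    using f continuous_on_subset unfolding V_def by blast
  have Ln_V: "continuous_on V (\<lambda>x. Ln (exp (f x)))"
    using near_V not_nonpos_Reals_if_near_1 by (intro continuous_intros f_V) auto
  have "connected V"
    unfolding V_def using W by (simp add: convex_connected convex_Int)
  moreover have "exp (f x) = exp (Ln (exp (f x)))" for x by simp
  ultimately obtain n :: int where "\<And>x. x \<in> V \<Longrightarrow> f x - Ln (exp (f x)) = 2 * pi * \<i> * of_int n"
    using continuous_logs_differ_by_constant[OF _ f_V Ln_V] by blast
  then show ?thesis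
    using that[OF \<delta>] unfolding V_def by (simp add: dist_commute)
qed

lemma continuous_log_tendsto_2pi_int:
  fixes f :: "'a::real_normed_vector \<Rightarrow> complex"
  assumes "convex W" "a \<notin> W" "continuous_on W f" "((\<lambda>x. exp (f x)) \<longlongrightarrow> 1) (at a within W)"
  obtains n :: int where "(f \<longlongrightarrow> 2 * pi * \<i> * of_int n) (at a within W)"
proof -
  obtain \<delta> and n :: int where \<delta>: "\<delta> > 0"
    and n: "\<And>x. x \<in> W \<Longrightarrow> dist x a < \<delta> \<Longrightarrow> f x - Ln (exp (f x)) = 2 * pi * \<i> * of_int n"
    using continuous_log_eq_Ln_near[OF assms] by blast
  have "((\<lambda>x. 2 * pi * \<i> * of_int n + Ln (exp (f x))) \<longlongrightarrow> 2 * pi * \<i> * of_int n + Ln 1)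
      (at a within W)"
    by (intro tendsto_intros assms(4)) auto
  moreover have "\<forall>\<^sub>F x in at a within W. 2 * pi * \<i> * of_int n + Ln (exp (f x)) = f x"
    unfolding eventually_at using \<delta> n by (intro exI[of _ \<delta>]) (auto simp: algebra_simps)
  ultimately have "(f \<longlongrightarrow> 2 * pi * \<i> * of_int n) (at a within W)"
    by (simp add: Lim_transform_eventually)
  then show ?thesis by (rule that)
qed

text \<open>Eventually \<open>f s - g\<close> is the principal logarithm of \<open>exp (f s - g)\<close>: both are continuous
  logarithms of the same function on the connected set \<open>K\<close>, and they agree at \<open>z0\<close>.\<close>

lemma uniform_limit_of_exp_diff:
  fixes f :: "'a \<Rightarrow> 'b::topological_space \<Rightarrow> complex"
  assumes K: "connected K" and z0: "z0 \<in> K"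
    and cont: "\<forall>\<^sub>F s in F. continuous_on K (f s)" and g: "continuous_on K g"
    and exp_lim: "uniform_limit K (\<lambda>s z. exp (f s z - g z)) (\<lambda>z. 1) F"
    and point: "((\<lambda>s. f s z0) \<longlongrightarrow> g z0) F"
  shows "uniform_limit K f g F"
  unfolding uniform_limit_iff
proof (intro allI impI)
  fix e :: real assume e: "e > 0"
  define e' where "e' = min (1/4) (e / 4)"
  have e': "e' > 0" "e' \<le> 1/4" "2 * e' < e" unfolding e'_def using e by auto
  have "\<forall>\<^sub>F s in F. dist (f s z0) (g z0) < 1"
    using point by (rule tendstoD) simp
  moreover have "\<forall>\<^sub>F s in F. \<forall>z\<in>K. dist (exp (f s z - g z)) 1 < e'"
    using exp_lim e' unfolding uniform_limit_iff by blast
  ultimately show "\<forall>\<^sub>F s in F. \<forall>z\<in>K. dist (f s z) (g z) < e"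
    using cont
  proof eventually_elim
    case (elim s)
    define d where "d = (\<lambda>z. f s z - g z)"
    define E where "E = (\<lambda>z. exp (d z))"
    have near1: "cmod (E z - 1) < e'" if "z \<in> K" for z
      using elim(2) that unfolding E_def d_def by (simp add: dist_norm)
    have Ln_small: "cmod (Ln (E z)) < 1/2" if "z \<in> K" for z
      using norm_Ln_le[of "E z - 1"] near1[OF that] e' by simp
    have cont_d: "continuous_on K d"
      unfolding d_def using elim(3) g by (intro continuous_intros)
    have "E z \<notin> \<real>\<^sub>\<le>\<^sub>0" if "z \<in> K" for z
      using near1[OF that] e' by (intro not_nonpos_Reals_if_near_1) simp
    then have cont_Ln: "continuous_on K (\<lambda>z. Ln (E z))"
      unfolding E_def using cont_d by (intro continuous_intros) auto
    have "exp (d z) = exp (Ln (E z))" for z by (simp add: E_def)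
    then obtain n :: int where n: "\<And>z. z \<in> K \<Longrightarrow> d z - Ln (E z) = 2 * pi * \<i> * of_int n"
      using continuous_logs_differ_by_constant[OF K cont_d cont_Ln] by blast
    have "cmod (d z0 - Ln (E z0)) < 1 + 1/2"
      using norm_triangle_ineq4[of "d z0" "Ln (E z0)"] elim(1) Ln_small[OF z0]
      unfolding d_def by (simp add: dist_norm)
    also have "\<dots> < 2 * pi" using pi_gt3 by simp
    finally have "d z0 = Ln (E z0)"
      by (rule exp_eq_imp_eq_if_close[rotated]) (simp add: E_def)
    with n[OF z0] have "n = 0" by simp
    show "\<forall>z\<in>K. dist (f s z) (g z) < e"
    proof
      fix z assume z: "z \<in> K"
      have "cmod (d z) = cmod (Ln (1 + (E z - 1)))"
        using n[OF z] \<open>n = 0\<close> by simp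
      also have "\<dots> \<le> 2 * cmod (E z - 1)"
        using near1[OF z] e' by (intro norm_Ln_le) simp
      also have "\<dots> < e" using near1[OF z] e' by linarith
      finally show "dist (f s z) (g z) < e" unfolding d_def by (simp add: dist_norm)
    qed
  qed
qed

section \<open>Stolz angles and angular limits\<close>

lemma eventually_at_within_mem: "eventually (\<lambda>x. x \<in> S) (at a within S)"
  by (simp add: eventually_at_filter)

lemma stolz_convex:
  assumes C: "C > 0"
  shows "convex (stolz \<sigma> C)"
  unfolding convex_alt
proof (intro ballI allI impI)
  fix x y :: complex and u :: real
  assume x: "x \<in> stolz \<sigma> C" and y: "y \<in> stolz \<sigma> C" and "0 \<le> u \<and> u \<le> 1"
  then have u: "0 \<le> u" "u \<le> 1" by auto
  define z where "z = (1 - u) *\<^sub>R x + u *\<^sub>R y"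
  have x1: "cmod x < 1" "cmod (\<sigma> - x) < C * (1 - cmod x)"
    and y1: "cmod y < 1" "cmod (\<sigma> - y) < C * (1 - cmod y)"
    using x y by (auto simp: stolz_def)
  have lt: "(1 - u) * a + u * b < (1 - u) * A + u * B" if "a < A" "b < B" for a b A B :: real
  proof (cases "u = 1")
    case False
    then have "(1 - u) * a < (1 - u) * A" using u that by simp
    moreover have "u * b \<le> u * B" using u that by (simp add: mult_left_mono)
    ultimately show ?thesis by linarith
  qed (use that in simp)
  have nz: "cmod z \<le> (1 - u) * cmod x + u * cmod y"
    unfolding z_def using norm_triangle_ineq[of "(1 - u) *\<^sub>R x" "u *\<^sub>R y"] u by simp
  also have "\<dots> < (1 - u) * 1 + u * 1"
    by (rule lt) (use x1 y1 in auto)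
  finally have z1: "cmod z < 1" by simp
  have "\<sigma> - z = (1 - u) *\<^sub>R (\<sigma> - x) + u *\<^sub>R (\<sigma> - y)"
    unfolding z_def by (simp add: algebra_simps)
  then have "cmod (\<sigma> - z) \<le> (1 - u) * cmod (\<sigma> - x) + u * cmod (\<sigma> - y)"
    using norm_triangle_ineq[of "(1 - u) *\<^sub>R (\<sigma> - x)" "u *\<^sub>R (\<sigma> - y)"] u by simp
  also have "\<dots> < (1 - u) * (C * (1 - cmod x)) + u * (C * (1 - cmod y))"
    by (rule lt) (use x1 y1 in auto)
  also have "\<dots> = C * (1 - ((1 - u) * cmod x + u * cmod y))"
    by (simp add: algebra_simps)
  also have "\<dots> \<le> C * (1 - cmod z)"
    using nz C by (simp add: mult_left_mono)
  finally show "(1 - u) *\<^sub>R x + u *\<^sub>R y \<in> stolz \<sigma> C"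
    using z1 unfolding stolz_def z_def by auto
qed

lemma stolz_mono: "C \<le> C' \<Longrightarrow> stolz \<sigma> C \<subseteq> stolz \<sigma> C'"
  unfolding stolz_def by (auto intro: less_le_trans mult_right_mono)

lemma stolz_subset_ball: "stolz \<sigma> C \<subseteq> ball 0 1"
  unfolding stolz_def by auto

lemma not_in_stolz: "cmod \<sigma> = 1 \<Longrightarrow> \<sigma> \<notin> stolz \<sigma> C"
  unfolding stolz_def by auto

lemma norm_radial_diff:
  assumes "cmod \<sigma> = 1" "r \<le> 1"
  shows "cmod (\<sigma> - of_real r * \<sigma>) = 1 - r"
proof -
  have "cmod (\<sigma> - of_real r * \<sigma>) = cmod (of_real (1 - r) * \<sigma>)"
    by (simp add: algebra_simps)
  also have "\<dots> = 1 - r"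
    using assms by (simp only: norm_mult norm_of_real) simp
  finally show ?thesis .
qed

lemma radial_in_stolz:
  assumes "cmod \<sigma> = 1" "0 \<le> r" "r < 1" "C > 1"
  shows "of_real r * \<sigma> \<in> stolz \<sigma> C"
  using assms norm_radial_diff[of \<sigma> r] by (simp add: stolz_def norm_mult)

lemma filterlim_radial_stolz:
  assumes "cmod \<sigma> = 1" "C > 1"
  shows "filterlim (\<lambda>r. of_real r * \<sigma>) (at \<sigma> within stolz \<sigma> C) (at_left 1)"
proof (rule filterlim_at_withinI)
  have "((\<lambda>r. of_real r * \<sigma>) \<longlongrightarrow> of_real 1 * \<sigma>) (at_left (1::real))"
    by (intro tendsto_intros)
  then show "((\<lambda>r. of_real r * \<sigma>) \<longlongrightarrow> \<sigma>) (at_left (1::real))" by simp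
  have "\<forall>\<^sub>F r in at_left 1. r \<in> {0<..<1::real}"
    by (rule eventually_at_left_real) simp
  then show "\<forall>\<^sub>F r in at_left 1. of_real r * \<sigma> \<in> stolz \<sigma> C - {\<sigma>}"
    by eventually_elim (use assms radial_in_stolz not_in_stolz in auto)
qed

lemma at_stolz_neq_bot:
  assumes "cmod \<sigma> = 1" "C > 1"
  shows "at \<sigma> within stolz \<sigma> C \<noteq> bot"
proof
  assume "at \<sigma> within stolz \<sigma> C = bot"
  then have "filterlim (\<lambda>r. of_real r * \<sigma>) bot (at_left (1::real))"
    using filterlim_radial_stolz[OF assms] by simp
  then show False by (simp add: filterlim_def bot_unique filtermap_bot_iff)
qed

lemma has_angular_limit_radial:
  assumes "has_angular_limit f \<sigma> L" "cmod \<sigma> = 1"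
  shows "((\<lambda>r. f (of_real r * \<sigma>)) \<longlongrightarrow> L) (at_left 1)"
proof -
  have "(f \<longlongrightarrow> L) (at \<sigma> within stolz \<sigma> 2)"
    using assms unfolding has_angular_limit_def by auto
  from filterlim_compose[OF this filterlim_radial_stolz[OF assms(2)]] show ?thesis
    by (simp add: o_def)
qed

lemma has_angular_limit_unique:
  assumes "has_angular_limit f \<sigma> L1" "has_angular_limit f \<sigma> L2" "cmod \<sigma> = 1"
  shows "L1 = L2"
  using tendsto_unique[OF _ has_angular_limit_radial[OF assms(1,3)] has_angular_limit_radial[OF assms(2,3)]]
  by simp

lemma has_angular_limitI_stolz_limits:
  assumes "cmod \<sigma> = 1" and lim: "\<And>C. C > 1 \<Longrightarrow> \<exists>l. (f \<longlongrightarrow> l) (at \<sigma> within stolz \<sigma> C)"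
  obtains L where "has_angular_limit f \<sigma> L"
proof -
  obtain L where L: "(f \<longlongrightarrow> L) (at \<sigma> within stolz \<sigma> 2)"
    using lim[of 2] by auto
  have "has_angular_limit f \<sigma> L"
    unfolding has_angular_limit_def
  proof (intro allI impI)
    fix C :: real assume C: "C > 1"
    obtain l where l: "(f \<longlongrightarrow> l) (at \<sigma> within stolz \<sigma> C)"
      using lim[OF C] by auto
    have "min C 2 > 1" using C by simp
    moreover have "(f \<longlongrightarrow> l) (at \<sigma> within stolz \<sigma> (min C 2))"
      "(f \<longlongrightarrow> L) (at \<sigma> within stolz \<sigma> (min C 2))"
      by (intro tendsto_within_subset[OF l stolz_mono] tendsto_within_subset[OF L stolz_mono]; simp)+
    ultimately have "l = L"
      using tendsto_unique at_stolz_neq_bot[OF assms(1)] by blast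
    then show "(f \<longlongrightarrow> L) (at \<sigma> within stolz \<sigma> C)" using l by simp
  qed
  then show ?thesis using that by blast
qed

lemma boundary_regular_fixpoint_angular_deriv:
  assumes "boundary_regular_fixpoint f \<sigma>" "cmod \<sigma> = 1"
  shows "has_angular_limit (\<lambda>z. (f z - \<sigma>) / (z - \<sigma>)) \<sigma> (angular_deriv f \<sigma>)"
proof -
  from assms(1) obtain D where D: "has_angular_deriv f \<sigma> D" and fixed: "has_angular_limit f \<sigma> \<sigma>"
    unfolding boundary_regular_fixpoint_def by auto
  have quotient: "has_angular_limit (\<lambda>z. (f z - \<sigma>) / (z - \<sigma>)) \<sigma> D'"
    if "has_angular_deriv f \<sigma> D'" for D'
  proof -
    from that obtain L where "has_angular_limit f \<sigma> L"
      "has_angular_limit (\<lambda>z. (f z - L) / (z - \<sigma>)) \<sigma> D'"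
      unfolding has_angular_deriv_def by auto
    then show ?thesis
      using has_angular_limit_unique[OF _ fixed assms(2)] by auto
  qed
  have "angular_deriv f \<sigma> = D"
    unfolding angular_deriv_def
  proof (rule the_equality)
    show "has_angular_deriv f \<sigma> D" by (rule D)
    show "D' = D" if "has_angular_deriv f \<sigma> D'" for D'
      using has_angular_limit_unique[OF quotient[OF that] quotient[OF D] assms(2)] .
  qed
  then show ?thesis using quotient[OF D] by simp
qed

section \<open>The Schwarz--Pick lemma and a radial Julia estimate\<close>

lemma Schwarz_Pick_Moebius:
  assumes holf: "f holomorphic_on ball 0 1" and fD: "\<And>z. cmod z < 1 \<Longrightarrow> cmod (f z) < 1"
    and a: "cmod a < 1" and b: "cmod b < 1"
  shows "cmod (Moebius_function 0 (f b) (f a)) \<le> cmod (Moebius_function 0 b a)"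
proof -
  define h where "h = Moebius_function 0 (f b) \<circ> f \<circ> Moebius_function 0 (-b)"
  have fb: "cmod (f b) < 1" using fD b by auto
  have M_ball: "Moebius_function 0 w ` ball 0 1 \<subseteq> ball 0 1" if "cmod w < 1" for w
    using that by (auto intro!: Moebius_function_norm_lt_1)
  have fM: "(f \<circ> Moebius_function 0 (-b)) holomorphic_on ball 0 1"
    using b M_ball[of "-b"]
    by (intro holomorphic_on_compose_gen[OF _ holf] Moebius_function_holomorphic) auto
  have "(f \<circ> Moebius_function 0 (-b)) ` ball 0 1 \<subseteq> ball 0 1"
    using M_ball[of "-b"] b fD by (auto simp: image_subset_iff)
  then have "h holomorphic_on ball 0 1"
    unfolding h_def using holomorphic_on_compose_gen[OF fM Moebius_function_holomorphic[OF fb]]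
    by (simp add: o_assoc)
  moreover have "h 0 = 0"
    unfolding h_def by (simp add: Moebius_function_of_zero Moebius_function_eq_zero)
  moreover have "cmod (h z) < 1" if "cmod z < 1" for z
  proof -
    have "cmod (Moebius_function 0 (-b) z) < 1"
      using b that by (intro Moebius_function_norm_lt_1) auto
    then show ?thesis
      unfolding h_def using fD fb by (auto intro!: Moebius_function_norm_lt_1)
  qed
  moreover have "cmod (Moebius_function 0 b a) < 1"
    using a b by (intro Moebius_function_norm_lt_1)
  ultimately have "cmod (h (Moebius_function 0 b a)) \<le> cmod (Moebius_function 0 b a)"
    using Schwarz_Lemma(1)[of h] by blast
  moreover have "Moebius_function 0 (-b) (Moebius_function 0 b a) = a"
    using b a by (intro Moebius_function_compose) auto
  ultimately show ?thesis unfolding h_def by simp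
qed

lemma norm_one_minus_cnj_mult_squared:
  "cmod (1 - cnj w * z)^2 - cmod (z - w)^2 = (1 - cmod w^2) * (1 - cmod z^2)"
  by (simp only: cmod_power2) (simp add: power2_eq_square algebra_simps)

lemma one_minus_cnj_mult_nonzero:
  assumes "cmod w < 1" "cmod z < 1"
  shows "1 - cnj w * z \<noteq> 0"
proof
  assume "1 - cnj w * z = 0"
  then have "cmod (cnj w * z) = 1" by (metis eq_iff_diff_eq_0 norm_one)
  moreover have "cmod w * cmod z < 1 * 1" by (rule mult_strict_mono') (use assms in auto)
  ultimately show False by (simp add: norm_mult)
qed

lemma one_minus_square_le:
  fixes x :: real
  assumes "0 \<le> x" "x \<le> 1"
  shows "1 - x^2 \<le> 2 - 2 * x"
proof -
  have "1 - x^2 = (1 - x) * (1 + x)" by (simp add: algebra_simps power2_eq_square)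
  also have "\<dots> \<le> (1 - x) * 2" using assms by (intro mult_left_mono) auto
  finally show ?thesis by simp
qed

lemma Schwarz_Pick_squared:
  assumes holf: "f holomorphic_on ball 0 1" and fD: "\<And>z. cmod z < 1 \<Longrightarrow> cmod (f z) < 1"
    and a: "cmod a < 1" and b: "cmod b < 1"
  shows "(1 - cmod b^2) * (1 - cmod a^2) * cmod (1 - cnj (f b) * f a)^2
       \<le> (1 - cmod (f b)^2) * (1 - cmod (f a)^2) * cmod (1 - cnj b * a)^2"
proof -
  have fa: "cmod (f a) < 1" and fb: "cmod (f b) < 1" using fD a b by auto
  define A where "A = cmod (1 - cnj (f b) * f a)"
  define B where "B = cmod (1 - cnj b * a)"
  define X where "X = cmod (f a - f b)"
  define Y where "Y = cmod (a - b)"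
  have A0: "A > 0" and B0: "B > 0"
    unfolding A_def B_def using one_minus_cnj_mult_nonzero fa fb a b by auto
  have "X / A \<le> Y / B"
    using Schwarz_Pick_Moebius[OF holf fD a b]
    by (simp add: Moebius_function_simple norm_divide A_def B_def X_def Y_def)
  then have "X * B \<le> Y * A" using A0 B0 by (simp add: field_simps)
  then have sq: "(X * B)^2 \<le> (Y * A)^2"
    unfolding X_def using B0 by (simp add: power_mono)
  have "(1 - cmod b^2) * (1 - cmod a^2) * A^2 = (B^2 - Y^2) * A^2"
    unfolding B_def Y_def norm_one_minus_cnj_mult_squared ..
  also have "\<dots> = B^2 * A^2 - (Y * A)^2" by (simp add: algebra_simps power_mult_distrib)
  also have "\<dots> \<le> B^2 * A^2 - (X * B)^2" using sq by simp
  also have "\<dots> = (A^2 - X^2) * B^2" by (simp add: algebra_simps power_mult_distrib)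
  also have "\<dots> = (1 - cmod (f b)^2) * (1 - cmod (f a)^2) * B^2"
    unfolding A_def X_def norm_one_minus_cnj_mult_squared ..
  finally show ?thesis unfolding A_def B_def .
qed

lemma Schwarz_Pick_on_radius:
  assumes holf: "f holomorphic_on ball 0 1" and fD: "\<And>z. cmod z < 1 \<Longrightarrow> cmod (f z) < 1"
    and \<sigma>: "cmod \<sigma> = 1" and r: "0 \<le> r" "r < 1" and s: "0 < s" "s < 1"
    and K: "cmod (f (of_real s * \<sigma>) - \<sigma>) \<le> K * (1 - s)"
  shows "(1 + s) * (1 - r^2) * cmod (1 - cnj (f (of_real s * \<sigma>)) * f (of_real r * \<sigma>))^2
           \<le> 2 * K * (1 - cmod (f (of_real r * \<sigma>))^2) * (1 - s * r)^2"
proof -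
  define a where "a = of_real r * \<sigma>"
  define b where "b = of_real s * \<sigma>"
  define X where "X = cmod (1 - cnj (f b) * f a)^2"
  have na: "cmod a = r" and nb: "cmod b = s"
    unfolding a_def b_def using \<sigma> r s by (simp_all add: norm_mult)
  then have fa: "cmod (f a) < 1" and fb: "cmod (f b) < 1" using fD r s by auto
  have "cnj b * a = of_real (s * r) * (cnj \<sigma> * \<sigma>)" unfolding a_def b_def by simp
  moreover have "cnj \<sigma> * \<sigma> = 1"
    using \<sigma> by (metis complex_norm_square mult.commute of_real_1 power_one)
  ultimately have "1 - cnj b * a = of_real (1 - s * r)" by simp
  moreover have "s * r \<le> 1" using r s by (simp add: mult_le_one)
  ultimately have nba: "cmod (1 - cnj b * a) = 1 - s * r"
    by (metis abs_of_nonneg diff_ge_0_iff_ge norm_of_real)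
  have pick: "(1 - s^2) * (1 - r^2) * X \<le> (1 - cmod (f b)^2) * (1 - cmod (f a)^2) * (1 - s * r)^2"
    using Schwarz_Pick_squared[OF holf fD, of a b] na nb nba r s unfolding X_def by simp
  have "1 - cmod (f b) \<le> cmod (f b - \<sigma>)"
    using norm_triangle_ineq2[of \<sigma> "f b"] \<sigma> by (simp add: norm_minus_commute)
  moreover have "1 - cmod (f b)^2 \<le> 2 - 2 * cmod (f b)"
    using one_minus_square_le[of "cmod (f b)"] fb by simp
  ultimately have fb2: "1 - cmod (f b)^2 \<le> 2 * K * (1 - s)"
    using K unfolding b_def by linarith
  have "cmod (f a)^2 \<le> 1" using fa by (intro power_le_one) auto
  then have "0 \<le> (1 - cmod (f a)^2) * (1 - s * r)^2" by simp
  from mult_right_mono[OF fb2 this]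
  have "(1 - s^2) * (1 - r^2) * X \<le> (2 * K * (1 - s)) * ((1 - cmod (f a)^2) * (1 - s * r)^2)"
    using pick by (simp add: mult.assoc)
  then have "(1 - s) * ((1 + s) * (1 - r^2) * X) \<le> (1 - s) * (2 * K * (1 - cmod (f a)^2) * (1 - s * r)^2)"
    by (simp add: algebra_simps power2_eq_square)
  then show ?thesis using s unfolding X_def a_def b_def by simp
qed

text \<open>Let the second point \<open>s \<sigma>\<close> in \<open>Schwarz_Pick_on_radius\<close> tend to \<open>\<sigma>\<close>.\<close>

lemma radial_Julia_inequality:
  assumes holf: "f holomorphic_on ball 0 1" and fD: "\<And>z. cmod z < 1 \<Longrightarrow> cmod (f z) < 1"
    and \<sigma>: "cmod \<sigma> = 1" and lim: "has_angular_limit f \<sigma> \<sigma>"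
    and der: "has_angular_limit (\<lambda>z. (f z - \<sigma>) / (z - \<sigma>)) \<sigma> D"
    and r: "0 \<le> r" "r < 1"
  shows "(1 - r^2) * cmod (\<sigma> - f (of_real r * \<sigma>))^2
           \<le> (cmod D + 1) * (1 - cmod (f (of_real r * \<sigma>))^2) * (1 - r)^2"
proof -
  define a where "a = of_real r * \<sigma>"
  define b where "b = (\<lambda>s::real. of_real s * \<sigma>)"
  define K where "K = cmod D + 1"
  have "\<forall>\<^sub>F s in at_left 1. dist ((f (b s) - \<sigma>) / (b s - \<sigma>)) D < 1"
    using has_angular_limit_radial[OF der \<sigma>] unfolding b_def by (rule tendstoD) simp
  moreover have "\<forall>\<^sub>F s in at_left 1. s \<in> {0<..<1::real}"
    by (rule eventually_at_left_real) simp
  ultimately have "\<forall>\<^sub>F s in at_left 1.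
      (1 + s) * (1 - r^2) * cmod (1 - cnj (f (b s)) * f a)^2 \<le> 2 * K * (1 - cmod (f a)^2) * (1 - s * r)^2"
  proof eventually_elim
    case (elim s)
    then have s: "0 < s" "s < 1" by auto
    have "cmod ((f (b s) - \<sigma>) / (b s - \<sigma>)) \<le> K"
      using elim(1) norm_triangle_ineq2[of "(f (b s) - \<sigma>) / (b s - \<sigma>)" D]
      unfolding K_def dist_norm by linarith
    moreover have "cmod (b s - \<sigma>) = 1 - s"
      using norm_radial_diff[OF \<sigma>, of s] s unfolding b_def by (simp add: norm_minus_commute)
    ultimately have "cmod (f (b s) - \<sigma>) \<le> K * (1 - s)"
      using s by (simp add: norm_divide divide_le_eq)
    then show ?case
      using Schwarz_Pick_on_radius[OF holf fD \<sigma> r s] unfolding a_def b_def by simp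
  qed
  moreover have "((\<lambda>s. f (b s)) \<longlongrightarrow> \<sigma>) (at_left 1)"
    using has_angular_limit_radial[OF lim \<sigma>] unfolding b_def .
  then have "((\<lambda>s. (1 + s) * (1 - r^2) * cmod (1 - cnj (f (b s)) * f a)^2)
              \<longlongrightarrow> (1 + 1) * (1 - r^2) * cmod (1 - cnj \<sigma> * f a)^2) (at_left 1)"
    by (intro tendsto_intros)
  moreover have "((\<lambda>s. 2 * K * (1 - cmod (f a)^2) * (1 - s * r)^2)
                   \<longlongrightarrow> 2 * K * (1 - cmod (f a)^2) * (1 - 1 * r)^2) (at_left 1)"
    by (intro tendsto_intros)
  ultimately have "(1 + 1) * (1 - r^2) * cmod (1 - cnj \<sigma> * f a)^2 \<le> 2 * K * (1 - cmod (f a)^2) * (1 - 1 * r)^2"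
    by (intro tendsto_le[OF trivial_limit_at_left_real, rotated])
  moreover have "cnj \<sigma> * \<sigma> = 1"
    using \<sigma> by (metis complex_norm_square mult.commute of_real_1 power_one)
  then have "\<sigma> - f a = \<sigma> * (1 - cnj \<sigma> * f a)" by (simp add: algebra_simps)
  then have "cmod (1 - cnj \<sigma> * f a) = cmod (\<sigma> - f a)" using \<sigma> by (simp add: norm_mult)
  ultimately have "2 * ((1 - r^2) * cmod (\<sigma> - f a)^2) \<le> 2 * (K * (1 - cmod (f a)^2) * (1 - r)^2)"
    by (simp add: algebra_simps)
  then show ?thesis unfolding a_def K_def by simp
qed

lemma radial_distance_to_boundary_fixpoint:
  assumes holf: "f holomorphic_on ball 0 1" and fD: "\<And>z. cmod z < 1 \<Longrightarrow> cmod (f z) < 1"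
    and \<sigma>: "cmod \<sigma> = 1" and lim: "has_angular_limit f \<sigma> \<sigma>"
    and der: "has_angular_limit (\<lambda>z. (f z - \<sigma>) / (z - \<sigma>)) \<sigma> D"
    and r: "0 \<le> r" "r < 1"
  shows "cmod (\<sigma> - f (of_real r * \<sigma>)) \<le> 2 * (cmod D + 1) * (1 - r)"
proof -
  define d where "d = cmod (\<sigma> - f (of_real r * \<sigma>))"
  define K where "K = cmod D + 1"
  have fa: "cmod (f (of_real r * \<sigma>)) < 1" using fD \<sigma> r by (simp add: norm_mult)
  then have d0: "d > 0" unfolding d_def using \<sigma> by auto
  have "1 - cmod (f (of_real r * \<sigma>)) \<le> d"
    unfolding d_def using norm_triangle_ineq2[of \<sigma> "f (of_real r * \<sigma>)"] \<sigma> by simp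
  moreover have "1 - cmod (f (of_real r * \<sigma>))^2 \<le> 2 - 2 * cmod (f (of_real r * \<sigma>))"
    using one_minus_square_le[of "cmod (f (of_real r * \<sigma>))"] fa by simp
  ultimately have fa2: "1 - cmod (f (of_real r * \<sigma>))^2 \<le> 2 * d" by linarith
  have K0: "K > 0" unfolding K_def by (simp add: add_nonneg_pos)
  have "(1 - r) * d^2 \<le> (1 - r^2) * d^2"
    using r by (intro mult_right_mono) (auto simp: power2_eq_square mult_left_le_one_le)
  also have "\<dots> \<le> K * (1 - cmod (f (of_real r * \<sigma>))^2) * (1 - r)^2"
    using radial_Julia_inequality[OF assms] unfolding d_def K_def .
  also have "\<dots> \<le> K * (2 * d) * (1 - r)^2"
    using fa2 K0 by (intro mult_right_mono mult_left_mono) auto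
  finally have "(1 - r) * d * d \<le> (1 - r) * d * (2 * K * (1 - r))"
    by (simp add: power2_eq_square algebra_simps)
  then have "d \<le> 2 * K * (1 - r)" using r d0 by (simp add: mult_le_cancel_left_pos)
  then show ?thesis unfolding d_def K_def .
qed

section \<open>Locally uniform convergence of holomorphic functions\<close>

lemma compact_in_ball_obtain_cball:
  fixes K :: "'a::real_normed_vector set"
  assumes "compact K" "K \<subseteq> ball 0 1"
  obtains \<rho> where "0 \<le> \<rho>" "\<rho> < 1" "K \<subseteq> cball 0 \<rho>"
proof (cases "K = {}")
  case False
  then obtain x0 where x0: "x0 \<in> K" "\<And>x. x \<in> K \<Longrightarrow> norm x \<le> norm x0"
    using compact_attains_sup[OF compact_continuous_image[OF continuous_on_norm_id assms(1)]]
    by force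
  moreover have "norm x0 < 1" using x0 assms(2) by auto
  moreover have "K \<subseteq> cball 0 (norm x0)" using x0 by auto
  ultimately show ?thesis using that[of "norm x0"] by simp
qed (use that[of 0] in auto)

lemma holomorphic_Lipschitz_on_cball:
  assumes holh: "h holomorphic_on ball 0 1" and hB: "\<And>z. cmod z < 1 \<Longrightarrow> cmod (h z) \<le> B"
    and \<rho>: "0 \<le> \<rho>" "\<rho> < 1" and x: "cmod x \<le> \<rho>" and y: "cmod y \<le> \<rho>"
  shows "cmod (h x - h y) \<le> 2 * B / (1 - \<rho>) * cmod (x - y)"
proof (rule field_differentiable_bound[of "cball 0 \<rho>" h "deriv h"])
  show "convex (cball (0::complex) \<rho>)" "x \<in> cball 0 \<rho>" "y \<in> cball 0 \<rho>"
    using x y by auto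
  fix z assume z: "z \<in> cball (0::complex) \<rho>"
  then show "(h has_field_derivative deriv h z) (at z within cball 0 \<rho>)"
    using \<rho> by (intro holomorphic_derivI[OF holh]) auto
  define r where "r = (1 - \<rho>) / 2"
  have r: "r > 0" unfolding r_def using \<rho> by simp
  have sub: "cball z r \<subseteq> ball 0 1"
  proof
    fix w assume "w \<in> cball z r"
    then have "cmod w \<le> cmod z + r"
      using norm_triangle_ineq2[of w z] by (simp add: dist_norm norm_minus_commute)
    also have "\<dots> < 1" using z \<rho> unfolding r_def by (simp add: field_simps)
    finally show "w \<in> ball 0 1" by simp
  qed
  have "cmod ((deriv ^^ 1) h z) \<le> fact 1 * B / r ^ 1"
  proof (rule Cauchy_inequality[OF _ _ r])
    show "h holomorphic_on ball z r"
      using holh sub ball_subset_cball holomorphic_on_subset by blast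
    show "continuous_on (cball z r) h"
      using holomorphic_on_imp_continuous_on[OF holh] sub continuous_on_subset by blast
    show "cmod (h w) \<le> B" if "cmod (z - w) = r" for w
      using that sub hB by (auto simp: dist_norm)
  qed
  then show "cmod (deriv h z) \<le> 2 * B / (1 - \<rho>)"
    unfolding r_def by (simp add: mult.commute)
qed

lemma norm_le_on_cball_if_le_on_sphere:
  fixes f :: "complex \<Rightarrow> complex"
  assumes "f holomorphic_on ball 0 1" "0 < \<rho>" "\<rho> < 1"
    and "\<And>z. z \<in> sphere 0 \<rho> \<Longrightarrow> cmod (f z) \<le> B" and "z \<in> cball 0 \<rho>"
  shows "cmod (f z) \<le> B"
proof (rule maximum_modulus_frontier[of f "cball 0 \<rho>"])
  have sub: "cball 0 \<rho> \<subseteq> ball (0::complex) 1" using assms(3) by auto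
  then show "f holomorphic_on interior (cball 0 \<rho>)"
    using assms(1) ball_subset_cball by (metis holomorphic_on_subset interior_cball order_trans)
  show "continuous_on (closure (cball 0 \<rho>)) f"
    using holomorphic_on_imp_continuous_on[OF assms(1)] sub by (simp add: continuous_on_subset)
qed (use assms in auto)

text \<open>A Vitali-type statement: the Cauchy estimates make a bounded family equi-Lipschitz on compact
  subsets, so pointwise convergence is locally uniform.\<close>

lemma uniform_limit_bounded_holomorphic_disc:
  fixes f :: "'a \<Rightarrow> complex \<Rightarrow> complex"
  assumes ev: "\<forall>\<^sub>F s in F. f s holomorphic_on ball 0 1 \<and> (\<forall>z. cmod z < 1 \<longrightarrow> cmod (f s z) \<le> B)"
    and holg: "g holomorphic_on ball 0 1" and gB: "\<And>z. cmod z < 1 \<Longrightarrow> cmod (g z) \<le> B"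
    and lim: "\<And>z. cmod z < 1 \<Longrightarrow> ((\<lambda>s. f s z) \<longlongrightarrow> g z) F"
    and K: "compact K" "K \<subseteq> ball 0 1"
  shows "uniform_limit K f g F"
proof -
  obtain \<rho> where \<rho>: "0 \<le> \<rho>" "\<rho> < 1" "K \<subseteq> cball 0 \<rho>"
    using compact_in_ball_obtain_cball[OF K] by blast
  then have K\<rho>: "\<And>x. x \<in> K \<Longrightarrow> cmod x \<le> \<rho>" by auto
  define Lip where "Lip = 2 * B / (1 - \<rho>)"
  have "B \<ge> 0" using gB[of 0] norm_ge_zero[of "g 0"] by (simp del: norm_ge_zero)
  then have "Lip \<ge> 0" unfolding Lip_def using \<rho> by simp
  show ?thesis
    unfolding uniform_limit_iff
  proof (intro allI impI)
    fix e :: real assume e: "e > 0"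
    define \<delta> where "\<delta> = e / (3 * (Lip + 1))"
    have \<delta>: "\<delta> > 0" and Lip\<delta>: "Lip * \<delta> \<le> e / 3"
      unfolding \<delta>_def using e \<open>Lip \<ge> 0\<close> by (auto simp: field_simps)
    obtain k where k: "finite k" "k \<subseteq> K" "K \<subseteq> (\<Union>c\<in>k. ball c \<delta>)"
      using seq_compact_imp_totally_bounded[OF compact_imp_seq_compact[OF K(1)]] \<delta> by meson
    have "\<forall>\<^sub>F s in F. \<forall>c\<in>k. dist (f s c) (g c) < e / 3"
      using k K e by (intro eventually_ball_finite ballI tendstoD lim) auto
    with ev show "\<forall>\<^sub>F s in F. \<forall>z\<in>K. dist (f s z) (g z) < e"
    proof eventually_elim
      case (elim s)
      show ?case
      proof
        fix z assume z: "z \<in> K"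
        then obtain c where c: "c \<in> k" "cmod (z - c) < \<delta>"
          using k by (auto simp: dist_norm norm_minus_commute)
        have \<rho>zc: "cmod z \<le> \<rho>" "cmod c \<le> \<rho>" using K\<rho> z c k by auto
        have "cmod (f s z - f s c) \<le> Lip * cmod (z - c)"
          unfolding Lip_def using elim(1) \<rho> \<rho>zc by (intro holomorphic_Lipschitz_on_cball) auto
        also have "\<dots> \<le> e / 3"
          using c(2) \<open>Lip \<ge> 0\<close> Lip\<delta> by (meson less_imp_le mult_left_mono order_trans)
        finally have fs: "cmod (f s z - f s c) \<le> e / 3" .
        have "cmod (g c - g z) \<le> Lip * cmod (c - z)"
          unfolding Lip_def using holg gB \<rho> \<rho>zc by (intro holomorphic_Lipschitz_on_cball) auto
        also have "\<dots> \<le> e / 3"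
          using c(2) \<open>Lip \<ge> 0\<close> Lip\<delta> by (metis less_imp_le mult_left_mono norm_minus_commute order_trans)
        finally have gs: "cmod (g c - g z) \<le> e / 3" .
        have "f s z - g z = (f s z - f s c) + (f s c - g c) + (g c - g z)" by simp
        then have "cmod (f s z - g z) \<le> cmod (f s z - f s c) + cmod (f s c - g c) + cmod (g c - g z)"
          by (metis norm_triangle_ineq order_trans add_right_mono)
        then show "dist (f s z) (g z) < e"
          using fs gs elim(2) c(1) by (auto simp: dist_norm)
      qed
    qed
  qed
qed


section \<open>Continuity of the normalised logarithms\<close>

lemma U_int_FD:
  assumes "\<phi> \<in> U_int_F \<tau> F" and "\<tau> \<in> ball 0 1"
  shows "\<phi> holomorphic_on ball 0 1" and "inj_on \<phi> (ball 0 1)"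
    and "\<And>z. cmod z < 1 \<Longrightarrow> cmod (\<phi> z) < 1" and "\<phi> \<tau> = \<tau>"
    and "\<And>\<sigma>. \<sigma> \<in> F \<Longrightarrow> boundary_regular_fixpoint \<phi> \<sigma>"
  using assms by (auto simp: U_int_F_def U_int_def univalent_selfmap_def image_subset_iff)

lemma radial_quotient_near_1:
  assumes \<tau>: "cmod \<tau> < 1" and hol: "\<phi> holomorphic_on ball 0 1"
    and \<phi>D: "\<And>z. cmod z < 1 \<Longrightarrow> cmod (\<phi> z) < 1"
    and \<sigma>: "cmod \<sigma> = 1" and brf: "boundary_regular_fixpoint \<phi> \<sigma>"
    and M: "cmod (angular_deriv \<phi> \<sigma>) \<le> M"
    and r: "1 - (1 - cmod \<tau>) / (4 * M + 8) \<le> r" "r < 1"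
  shows "0 \<le> r" and "of_real r * \<sigma> \<noteq> \<tau>"
    and "cmod ((\<phi> (of_real r * \<sigma>) - \<tau>) / (of_real r * \<sigma> - \<tau>) - 1) < 1"
proof -
  define z where "z = of_real r * \<sigma>"
  have M0: "M \<ge> 0" using M norm_ge_zero order_trans by blast
  have close: "(4 * M + 8) * (1 - r) \<le> 1 - cmod \<tau>"
    using r M0 by (simp add: field_simps)
  have "1 - r \<le> (4 * M + 8) * (1 - r)"
    using M0 r(2) mult_right_mono[of 1 "4 * M + 8" "1 - r"] by simp
  then show r0: "0 \<le> r"
    using close norm_ge_zero[of \<tau>] by linarith
  have "cmod (\<sigma> - \<phi> z) \<le> 2 * (cmod (angular_deriv \<phi> \<sigma>) + 1) * (1 - r)"
    unfolding z_def using brf \<sigma> r0 r(2)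
    by (intro radial_distance_to_boundary_fixpoint[OF hol \<phi>D \<sigma>] boundary_regular_fixpoint_angular_deriv)
       (auto simp: boundary_regular_fixpoint_def)
  also have "\<dots> \<le> 2 * (M + 1) * (1 - r)"
    using M r by (intro mult_right_mono) auto
  finally have \<phi>z: "cmod (\<sigma> - \<phi> z) \<le> 2 * (M + 1) * (1 - r)" .
  have \<sigma>z: "cmod (\<sigma> - z) = 1 - r"
    unfolding z_def using norm_radial_diff[OF \<sigma>] r by simp
  have "cmod (\<phi> z - z) \<le> cmod (\<sigma> - \<phi> z) + cmod (\<sigma> - z)"
    using norm_triangle_ineq4[of "\<sigma> - z" "\<sigma> - \<phi> z"] by (simp add: norm_minus_commute)
  then have num: "cmod (\<phi> z - z) \<le> (2 * M + 3) * (1 - r)"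
    using \<phi>z \<sigma>z by (simp add: algebra_simps)
  have "1 - cmod \<tau> \<le> cmod (\<sigma> - \<tau>)"
    using norm_triangle_ineq2[of \<sigma> \<tau>] \<sigma> by simp
  also have "\<dots> \<le> cmod (z - \<tau>) + cmod (\<sigma> - z)"
    using norm_triangle_ineq[of "\<sigma> - z" "z - \<tau>"] by simp
  finally have den: "cmod (z - \<tau>) \<ge> (1 - cmod \<tau>) - (1 - r)"
    using \<sigma>z by simp
  have "(2 * M + 3) * (1 - r) = (2 * M + 4) * (1 - r) - (1 - r)"
    "2 * ((2 * M + 4) * (1 - r)) = (4 * M + 8) * (1 - r)"
    by (simp_all add: algebra_simps)
  then have less: "cmod (\<phi> z - z) < cmod (z - \<tau>)"
    using num den close \<tau> by linarith
  then show "of_real r * \<sigma> \<noteq> \<tau>" unfolding z_def by auto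
  then have "(\<phi> z - \<tau>) / (z - \<tau>) - 1 = (\<phi> z - z) / (z - \<tau>)"
    unfolding z_def by (simp add: field_simps)
  then show "cmod ((\<phi> (of_real r * \<sigma>) - \<tau>) / (of_real r * \<sigma> - \<tau>) - 1) < 1"
    using less unfolding z_def by (simp add: norm_divide divide_less_eq)
qed

text \<open>Along the radius, \<open>\<Psi>\<close> and the principal logarithm of the quotient differ by a constant in
  \<open>2\<pi>i\<int>\<close>, which tends to \<open>0\<close> at \<open>\<sigma>\<close>.\<close>

lemma log_branch_eq_Ln_on_radius:
  assumes \<tau>: "cmod \<tau> < 1" and hol: "\<phi> holomorphic_on ball 0 1"
    and \<phi>D: "\<And>z. cmod z < 1 \<Longrightarrow> cmod (\<phi> z) < 1"
    and \<sigma>: "cmod \<sigma> = 1" and brf: "boundary_regular_fixpoint \<phi> \<sigma>"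
    and M: "cmod (angular_deriv \<phi> \<sigma>) \<le> M"
    and r: "1 - (1 - cmod \<tau>) / (4 * M + 8) \<le> r" "r < 1"
    and lb: "is_log_branch \<tau> \<phi> \<Psi>" and lim: "has_angular_limit \<Psi> \<sigma> 0"
  shows "\<Psi> (of_real r * \<sigma>) = Ln ((\<phi> (of_real r * \<sigma>) - \<tau>) / (of_real r * \<sigma> - \<tau>))"
proof -
  define S where "S = {r..<1}"
  define G where "G = (\<lambda>x::real. (\<phi> (of_real x * \<sigma>) - \<tau>) / (of_real x * \<sigma> - \<tau>))"
  have near: "0 \<le> x" "of_real x * \<sigma> \<noteq> \<tau>" "cmod (G x - 1) < 1" if "x \<in> S" for x
    using radial_quotient_near_1[OF \<tau> hol \<phi>D \<sigma> brf M, of x] that r unfolding S_def G_def by auto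
  have in_ball: "of_real x * \<sigma> \<in> ball 0 1" if "x \<in> S" for x
    using near(1)[OF that] that \<sigma> unfolding S_def by (auto simp: norm_mult)
  have radius: "continuous_on S (\<lambda>x. of_real x * \<sigma>)"
    by (intro continuous_intros)
  have cont_\<Psi>: "continuous_on S (\<lambda>x. \<Psi> (of_real x * \<sigma>))"
    using lb in_ball unfolding is_log_branch_def
    by (intro continuous_on_compose2[OF holomorphic_on_imp_continuous_on radius]) auto
  have "continuous_on S (\<lambda>x. \<phi> (of_real x * \<sigma>))"
    using hol in_ball
    by (intro continuous_on_compose2[OF holomorphic_on_imp_continuous_on radius]) auto
  then have "continuous_on S G"
    unfolding G_def using near(2) by (intro continuous_intros) auto
  then have cont_Ln: "continuous_on S (\<lambda>x. Ln (G x))"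
    using near(3) not_nonpos_Reals_if_near_1 by (intro continuous_intros) auto
  have "exp (\<Psi> (of_real x * \<sigma>)) = exp (Ln (G x))" if "x \<in> S" for x
  proof -
    have "G x \<noteq> 0" using near(3)[OF that] by auto
    then show ?thesis
      using lb in_ball[OF that] near(2)[OF that] unfolding is_log_branch_def G_def by auto
  qed
  then obtain n :: int
    where n: "\<And>x. x \<in> S \<Longrightarrow> \<Psi> (of_real x * \<sigma>) - Ln (G x) = 2 * pi * \<i> * of_int n"
    using continuous_logs_differ_by_constant[OF _ cont_\<Psi> cont_Ln] unfolding S_def by auto
  have "((\<lambda>x. \<phi> (of_real x * \<sigma>)) \<longlongrightarrow> \<sigma>) (at_left 1)"
    using brf \<sigma> has_angular_limit_radial unfolding boundary_regular_fixpoint_def by blast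
  then have "(G \<longlongrightarrow> (\<sigma> - \<tau>) / (of_real 1 * \<sigma> - \<tau>)) (at_left 1)"
    unfolding G_def using \<sigma> \<tau> by (intro tendsto_intros) auto
  moreover have "\<sigma> \<noteq> \<tau>" using \<sigma> \<tau> by auto
  ultimately have "(G \<longlongrightarrow> 1) (at_left 1)" by simp
  then have "((\<lambda>x. \<Psi> (of_real x * \<sigma>) - Ln (G x)) \<longlongrightarrow> 0 - Ln 1) (at_left 1)"
    using has_angular_limit_radial[OF lim \<sigma>] by (intro tendsto_intros) auto
  moreover have "\<forall>\<^sub>F x in at_left 1. \<Psi> (of_real x * \<sigma>) - Ln (G x) = 2 * pi * \<i> * of_int n"
    using eventually_at_left_real[OF r(2)] by eventually_elim (simp add: S_def n)
  ultimately have "2 * pi * \<i> * of_int n = (0::complex)"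
    using tendsto_unique[OF trivial_limit_at_left_real] tendsto_eventually by fastforce
  then show ?thesis
    using n[of r] r unfolding S_def G_def by simp
qed

lemma exp_diff_log_branches:
  assumes "is_log_branch \<tau> \<phi>1 \<Psi>1" "is_log_branch \<tau> \<phi>2 \<Psi>2"
    and "z \<in> ball 0 1" "z \<noteq> \<tau>" "\<phi>2 z \<noteq> \<tau>"
  shows "exp (\<Psi>1 z - \<Psi>2 z) - 1 = (\<phi>1 z - \<phi>2 z) / (\<phi>2 z - \<tau>)"
proof -
  have "exp (\<Psi>1 z) = (\<phi>1 z - \<tau>) / (z - \<tau>)" "exp (\<Psi>2 z) = (\<phi>2 z - \<tau>) / (z - \<tau>)"
    using assms(1-4) unfolding is_log_branch_def by auto
  then have "exp (\<Psi>1 z - \<Psi>2 z) = (\<phi>1 z - \<tau>) / (\<phi>2 z - \<tau>)"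
    using assms(4,5) by (simp add: exp_diff)
  then show ?thesis
    using assms(5) by (simp add: field_simps)
qed

text \<open>The denominator in \<open>exp (\<Psi>\<^sub>s - \<Psi>) - 1 = (\<phi>\<^sub>s - \<phi>) / (\<phi> - \<tau>)\<close> is bounded away from \<open>0\<close>
  on a circle around \<open>\<tau>\<close> by injectivity, and the maximum modulus principle carries the estimate
  inside.\<close>

lemma uniform_limit_exp_diff_log_branches:
  fixes \<phi> \<Psi> :: "'a \<Rightarrow> complex \<Rightarrow> complex"
  assumes \<rho>: "cmod \<tau> < \<rho>" "\<rho> < 1"
    and hol0: "\<phi>0 holomorphic_on ball 0 1" and inj0: "inj_on \<phi>0 (ball 0 1)" and fix0: "\<phi>0 \<tau> = \<tau>"
    and lb: "\<forall>\<^sub>F s in F. is_log_branch \<tau> (\<phi> s) (\<Psi> s)" and lb0: "is_log_branch \<tau> \<phi>0 \<Psi>0"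
    and unif: "uniform_limit (sphere 0 \<rho>) \<phi> \<phi>0 F"
  shows "uniform_limit (cball 0 \<rho>) (\<lambda>s z. exp (\<Psi> s z - \<Psi>0 z)) (\<lambda>z. 1) F"
proof -
  have sphere: "sphere 0 \<rho> \<subseteq> ball 0 1 - {\<tau>}" and \<rho>0: "\<rho> > 0"
    using \<rho> norm_ge_zero[of \<tau>] by (auto simp del: norm_ge_zero)
  have "continuous_on (sphere 0 \<rho>) \<phi>0"
    using holomorphic_on_imp_continuous_on[OF hol0] sphere continuous_on_subset by blast
  then have cont: "continuous_on (sphere 0 \<rho>) (\<lambda>z. cmod (\<phi>0 z - \<tau>))"
    by (intro continuous_intros)
  have "sphere (0::complex) \<rho> \<noteq> {}"
    using \<rho>0 by (simp add: sphere_eq_empty)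
  then obtain z1 where z1: "z1 \<in> sphere 0 \<rho>"
    and min: "\<And>z. z \<in> sphere 0 \<rho> \<Longrightarrow> cmod (\<phi>0 z1 - \<tau>) \<le> cmod (\<phi>0 z - \<tau>)"
    using compact_attains_inf[OF compact_continuous_image[OF cont compact_sphere]] by fastforce
  define c where "c = cmod (\<phi>0 z1 - \<tau>)"
  have \<phi>0_ne: "\<phi>0 z \<noteq> \<tau>" if "z \<in> sphere 0 \<rho>" for z
  proof -
    have "z \<in> ball 0 1" "z \<noteq> \<tau>" "\<tau> \<in> ball 0 1" using that sphere \<rho> by auto
    then show ?thesis using inj0 fix0 by (metis inj_onD)
  qed
  then have c: "c > 0" unfolding c_def using z1 by simp
  show ?thesis
    unfolding uniform_limit_iff
  proof (intro allI impI)
    fix \<epsilon> :: real assume \<epsilon>: "\<epsilon> > 0"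
    have "\<forall>\<^sub>F s in F. \<forall>z\<in>sphere 0 \<rho>. dist (\<phi> s z) (\<phi>0 z) < \<epsilon> / 2 * c"
      using unif \<epsilon> c unfolding uniform_limit_iff by (meson half_gt_zero mult_pos_pos)
    with lb show "\<forall>\<^sub>F s in F. \<forall>z\<in>cball 0 \<rho>. dist (exp (\<Psi> s z - \<Psi>0 z)) 1 < \<epsilon>"
    proof eventually_elim
      case (elim s)
      have "cmod (exp (\<Psi> s z - \<Psi>0 z) - 1) \<le> \<epsilon> / 2" if z: "z \<in> sphere 0 \<rho>" for z
      proof -
        have "z \<in> ball 0 1" "z \<noteq> \<tau>" using z sphere by auto
        then have "cmod (exp (\<Psi> s z - \<Psi>0 z) - 1) = cmod (\<phi> s z - \<phi>0 z) / cmod (\<phi>0 z - \<tau>)"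
          using exp_diff_log_branches[OF elim(1) lb0 _ _ \<phi>0_ne[OF z]] by (simp add: norm_divide)
        also have "\<dots> \<le> (\<epsilon> / 2 * c) / c"
          using elim(2) z min[OF z] c \<epsilon> unfolding c_def
          by (intro frac_le) (auto simp: dist_norm less_imp_le)
        finally show ?thesis using c by simp
      qed
      moreover have "(\<lambda>z. exp (\<Psi> s z - \<Psi>0 z) - 1) holomorphic_on ball 0 1"
        using elim(1) lb0 unfolding is_log_branch_def by (intro holomorphic_intros) auto
      ultimately have "cmod (exp (\<Psi> s z - \<Psi>0 z) - 1) \<le> \<epsilon> / 2" if "z \<in> cball 0 \<rho>" for z
        using norm_le_on_cball_if_le_on_sphere[OF _ \<rho>0 \<rho>(2) _ that] by blast
      then show ?case
        using \<epsilon> by (force simp: dist_norm)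
    qed
  qed
qed

lemma log_branch_tendsto_on_radius:
  assumes \<tau>: "\<tau> \<in> ball 0 1" and \<sigma>: "cmod \<sigma> = 1"
    and good: "\<forall>\<^sub>F s in Fil. \<phi> s \<in> U_int_F \<tau> {\<sigma>} \<and> cmod (angular_deriv (\<phi> s) \<sigma>) \<le> M
        \<and> is_log_branch \<tau> (\<phi> s) (\<Psi> s) \<and> has_angular_limit (\<Psi> s) \<sigma> 0"
    and good0: "\<phi>0 \<in> U_int_F \<tau> {\<sigma>}" "cmod (angular_deriv \<phi>0 \<sigma>) \<le> M"
      "is_log_branch \<tau> \<phi>0 \<Psi>0" "has_angular_limit \<Psi>0 \<sigma> 0"
    and r: "1 - (1 - cmod \<tau>) / (4 * M + 8) \<le> r" "r < 1"
    and lim: "((\<lambda>s. \<phi> s (of_real r * \<sigma>)) \<longlongrightarrow> \<phi>0 (of_real r * \<sigma>)) Fil"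
  shows "((\<lambda>s. \<Psi> s (of_real r * \<sigma>)) \<longlongrightarrow> \<Psi>0 (of_real r * \<sigma>)) Fil"
proof -
  define z where "z = of_real r * \<sigma>"
  have \<tau>1: "cmod \<tau> < 1" using \<tau> by simp
  have pinned: "\<Psi>' z = Ln ((\<phi>' z - \<tau>) / (z - \<tau>))"
    if "\<phi>' \<in> U_int_F \<tau> {\<sigma>}" "cmod (angular_deriv \<phi>' \<sigma>) \<le> M"
      "is_log_branch \<tau> \<phi>' \<Psi>'" "has_angular_limit \<Psi>' \<sigma> 0" for \<phi>' \<Psi>'
    using log_branch_eq_Ln_on_radius[OF \<tau>1 U_int_FD(1,3)[OF that(1) \<tau>] \<sigma>
        U_int_FD(5)[OF that(1) \<tau>] that(2) r that(3,4)]
    unfolding z_def by simp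
  have near: "z \<noteq> \<tau>" "cmod ((\<phi>0 z - \<tau>) / (z - \<tau>) - 1) < 1"
    using radial_quotient_near_1[OF \<tau>1 U_int_FD(1,3)[OF good0(1) \<tau>] \<sigma>
        U_int_FD(5)[OF good0(1) \<tau>] good0(2) r] unfolding z_def by auto
  then have "((\<lambda>s. Ln ((\<phi> s z - \<tau>) / (z - \<tau>))) \<longlongrightarrow> Ln ((\<phi>0 z - \<tau>) / (z - \<tau>))) Fil"
    using lim not_nonpos_Reals_if_near_1 unfolding z_def by (intro tendsto_intros) auto
  moreover have "\<forall>\<^sub>F s in Fil. Ln ((\<phi> s z - \<tau>) / (z - \<tau>)) = \<Psi> s z"
    using good by eventually_elim (use pinned in auto)
  ultimately have "((\<lambda>s. \<Psi> s z) \<longlongrightarrow> Ln ((\<phi>0 z - \<tau>) / (z - \<tau>))) Fil"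
    by (rule Lim_transform_eventually)
  then show ?thesis
    using pinned[OF good0] unfolding z_def by simp
qed

text \<open>A bound on the angular derivatives at \<open>\<sigma>\<close> gives one point \<open>z\<^sub>s\<close> on the radius to \<open>\<sigma>\<close>
  at which all branches are principal logarithms; this pins the branches down, and the remaining
  convergence is that of the maps themselves.\<close>

lemma uniform_limit_log_branches:
  assumes \<tau>: "\<tau> \<in> ball 0 1" and \<sigma>: "cmod \<sigma> = 1"
    and good: "\<forall>\<^sub>F s in Fil. \<phi> s \<in> U_int_F \<tau> {\<sigma>} \<and> cmod (angular_deriv (\<phi> s) \<sigma>) \<le> M
        \<and> is_log_branch \<tau> (\<phi> s) (\<Psi> s) \<and> has_angular_limit (\<Psi> s) \<sigma> 0"
    and good0: "\<phi>0 \<in> U_int_F \<tau> {\<sigma>}" "cmod (angular_deriv \<phi>0 \<sigma>) \<le> M"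
      "is_log_branch \<tau> \<phi>0 \<Psi>0" "has_angular_limit \<Psi>0 \<sigma> 0"
    and pointwise: "\<And>z. z \<in> ball 0 1 \<Longrightarrow> ((\<lambda>s. \<phi> s z) \<longlongrightarrow> \<phi>0 z) Fil"
    and K: "compact K" "K \<subseteq> ball 0 1"
  shows "uniform_limit K \<Psi> \<Psi>0 Fil"
proof -
  note \<phi>0 = U_int_FD[OF good0(1) \<tau>]
  have \<tau>1: "cmod \<tau> < 1" using \<tau> by simp
  define r0 where "r0 = 1 - (1 - cmod \<tau>) / (4 * M + 8)"
  define zs where "zs = of_real r0 * \<sigma>"
  have "M \<ge> 0" using good0(2) norm_ge_zero order_trans by blast
  then have "r0 < 1" unfolding r0_def using \<tau>1 by simp
  then have r0: "r0 < 1" "0 \<le> r0"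
    using radial_quotient_near_1(1)[OF \<tau>1 \<phi>0(1,3) \<sigma> \<phi>0(5) good0(2) _ \<open>r0 < 1\<close>]
    unfolding r0_def by simp_all
  then have zs_ball: "zs \<in> ball 0 1" and zs_norm: "cmod zs = r0"
    using \<sigma> unfolding zs_def by (auto simp: norm_mult)
  have \<Psi>_zs: "((\<lambda>s. \<Psi> s zs) \<longlongrightarrow> \<Psi>0 zs) Fil"
    unfolding zs_def using r0 pointwise[OF zs_ball] unfolding zs_def r0_def
    by (intro log_branch_tendsto_on_radius[OF \<tau> \<sigma> good good0]) auto
  obtain \<rho>K where \<rho>K: "\<rho>K < 1" "K \<subseteq> cball 0 \<rho>K"
    using compact_in_ball_obtain_cball[OF K] by blast
  define \<rho> where "\<rho> = max (max \<rho>K r0) ((1 + cmod \<tau>) / 2)"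
  have \<rho>: "cmod \<tau> < \<rho>" "\<rho> < 1" and K_sub: "K \<subseteq> cball 0 \<rho>" and zs_cball: "zs \<in> cball 0 \<rho>"
    using \<rho>K r0 \<tau>1 zs_norm unfolding \<rho>_def by (auto simp: less_max_iff_disj)
  have "uniform_limit (sphere 0 \<rho>) \<phi> \<phi>0 Fil"
  proof (rule uniform_limit_bounded_holomorphic_disc)
    show "\<forall>\<^sub>F s in Fil. \<phi> s holomorphic_on ball 0 1 \<and> (\<forall>z. cmod z < 1 \<longrightarrow> cmod (\<phi> s z) \<le> 1)"
      using good by eventually_elim (use \<tau> U_int_FD in \<open>auto intro: less_imp_le\<close>)
  qed (use \<phi>0 pointwise \<rho> in \<open>auto simp: less_imp_le\<close>)
  moreover have "\<forall>\<^sub>F s in Fil. is_log_branch \<tau> (\<phi> s) (\<Psi> s)"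
    using good by eventually_elim simp
  ultimately have exp_lim: "uniform_limit (cball 0 \<rho>) (\<lambda>s z. exp (\<Psi> s z - \<Psi>0 z)) (\<lambda>z. 1) Fil"
    by (intro uniform_limit_exp_diff_log_branches[OF \<rho> \<phi>0(1,2,4) _ good0(3)])
  have cont: "continuous_on (cball 0 \<rho>) \<Psi>'" if "is_log_branch \<tau> \<phi>' \<Psi>'" for \<phi>' \<Psi>'
  proof -
    have "cball 0 \<rho> \<subseteq> ball 0 1" using \<rho> by auto
    then show ?thesis
      using that holomorphic_on_imp_continuous_on continuous_on_subset
      unfolding is_log_branch_def by blast
  qed
  have "\<forall>\<^sub>F s in Fil. continuous_on (cball 0 \<rho>) (\<Psi> s)"
    using good by eventually_elim (use cont in blast)
  then have "uniform_limit (cball 0 \<rho>) \<Psi> \<Psi>0 Fil"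
    using uniform_limit_of_exp_diff[OF connected_cball zs_cball _ cont[OF good0(3)] exp_lim \<Psi>_zs]
    by blast
  then show ?thesis
    using K_sub by (rule uniform_limit_on_subset)
qed

lemma uniform_limit_log_branch_family:
  fixes \<phi> \<Psi> :: "real \<Rightarrow> complex \<Rightarrow> complex"
  assumes \<tau>: "\<tau> \<in> ball 0 1" and F: "F \<subseteq> sphere 0 1"
    and \<phi>: "\<forall>t\<in>I. \<phi> t \<in> U_int_F \<tau> F" and cont: "\<forall>z\<in>ball 0 1. continuous_on I (\<lambda>t. \<phi> t z)"
    and \<sigma>0: "\<sigma>0 \<in> F"
    and bound: "\<forall>t\<in>I. \<exists>e>0. \<exists>M. \<forall>s\<in>I. \<bar>s - t\<bar> < e \<longrightarrow> cmod (angular_deriv (\<phi> s) \<sigma>0) \<le> M"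
    and \<Psi>: "\<forall>t\<in>I. is_log_branch \<tau> (\<phi> t) (\<Psi> t) \<and> (\<forall>\<sigma>\<in>F. has_angular_limit (\<Psi> t) \<sigma> 0)"
    and t0: "t0 \<in> I" and K: "compact K" "K \<subseteq> ball 0 1"
  shows "uniform_limit K \<Psi> (\<Psi> t0) (at t0 within I)"
proof -
  obtain e M where e: "e > 0"
    and M: "\<And>s. s \<in> I \<Longrightarrow> \<bar>s - t0\<bar> < e \<Longrightarrow> cmod (angular_deriv (\<phi> s) \<sigma>0) \<le> M"
    using bound t0 by meson
  have good: "\<phi> s \<in> U_int_F \<tau> {\<sigma>0} \<and> cmod (angular_deriv (\<phi> s) \<sigma>0) \<le> M
      \<and> is_log_branch \<tau> (\<phi> s) (\<Psi> s) \<and> has_angular_limit (\<Psi> s) \<sigma>0 0"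
    if "s \<in> I" "\<bar>s - t0\<bar> < e" for s
    using \<phi> \<Psi> \<sigma>0 M that by (auto simp: U_int_F_def)
  have "\<forall>\<^sub>F s in at t0 within I. dist s t0 < e" "\<forall>\<^sub>F s in at t0 within I. s \<in> I"
    using tendstoD[OF tendsto_ident_at e] eventually_at_within_mem by auto
  then have "\<forall>\<^sub>F s in at t0 within I. \<phi> s \<in> U_int_F \<tau> {\<sigma>0} \<and> cmod (angular_deriv (\<phi> s) \<sigma>0) \<le> M
      \<and> is_log_branch \<tau> (\<phi> s) (\<Psi> s) \<and> has_angular_limit (\<Psi> s) \<sigma>0 0"
    by eventually_elim (use good in \<open>simp add: dist_real_def\<close>)
  moreover have "\<phi> t0 \<in> U_int_F \<tau> {\<sigma>0}" "cmod (angular_deriv (\<phi> t0) \<sigma>0) \<le> M"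
    "is_log_branch \<tau> (\<phi> t0) (\<Psi> t0)" "has_angular_limit (\<Psi> t0) \<sigma>0 0"
    using good[OF t0] e by auto
  moreover have "((\<lambda>s. \<phi> s z) \<longlongrightarrow> \<phi> t0 z) (at t0 within I)" if "z \<in> ball 0 1" for z
    using cont that t0 unfolding continuous_on_def by auto
  moreover have "cmod \<sigma>0 = 1" using \<sigma>0 F by auto
  ultimately show ?thesis
    using uniform_limit_log_branches[OF \<tau> _ _ _ _ _ _ _ K] by blast
qed

section \<open>Existence of the normalised logarithm\<close>

definition diff_quot :: "(complex \<Rightarrow> complex) \<Rightarrow> complex \<Rightarrow> complex \<Rightarrow> complex" where
  "diff_quot f z w = (if z = w then deriv f z else (f z - f w) / (z - w))"

lemma diff_quot_commute: "diff_quot f z w = diff_quot f w z"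
proof (cases "z = w")
  case False
  have "(f z - f w) / (z - w) = (- (f w - f z)) / (- (w - z))" by simp
  then show ?thesis unfolding diff_quot_def using False by (simp only: minus_divide_divide) simp
qed (simp add: diff_quot_def)

lemma diff_quot_nonzero:
  assumes "f holomorphic_on S" "open S" "inj_on f S" "z \<in> S" "w \<in> S"
  shows "diff_quot f z w \<noteq> 0"
proof (cases "z = w")
  case True
  then show ?thesis
    using holomorphic_injective_imp_regular[OF assms(1,2,3,4)] by (simp add: diff_quot_def)
next
  case False
  then have "f z \<noteq> f w" using assms(3-5) by (meson inj_onD)
  then show ?thesis using False by (simp add: diff_quot_def)
qed

text \<open>The mean value inequality applied to \<open>f z - c z\<close>; it covers the diagonal as well.\<close>

lemma norm_diff_quot_minus_le:
  assumes hol: "f holomorphic_on S" and S: "open S" and C: "convex C" "C \<subseteq> S"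
    and B: "\<And>\<xi>. \<xi> \<in> C \<Longrightarrow> cmod (deriv f \<xi> - c) \<le> B" and z: "z \<in> C" and w: "w \<in> C"
  shows "cmod (diff_quot f z w - c) \<le> B"
proof (cases "z = w")
  case True
  then show ?thesis using B z by (simp add: diff_quot_def)
next
  case False
  have "((\<lambda>\<xi>. f \<xi> - c * \<xi>) has_field_derivative deriv f \<xi> - c) (at \<xi> within C)" if "\<xi> \<in> C" for \<xi>
    using that C by (auto intro!: derivative_eq_intros holomorphic_derivI[OF hol S])
  then have "cmod ((f z - c * z) - (f w - c * w)) \<le> B * cmod (z - w)"
    by (rule field_differentiable_bound[OF C(1) _ B z w])
  moreover have "diff_quot f z w - c = ((f z - c * z) - (f w - c * w)) / (z - w)"
    using False by (simp add: diff_quot_def field_simps)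
  ultimately show ?thesis
    using False by (simp add: norm_divide divide_le_eq)
qed

lemma isCont_diff_quot_diagonal:
  assumes hol: "f holomorphic_on S" and S: "open S" and a: "a \<in> S"
  shows "isCont (\<lambda>p. diff_quot f (fst p) (snd p)) (a, a)"
  unfolding continuous_at_eps_delta
proof (intro allI impI)
  fix e :: real assume e: "e > 0"
  have "isCont (deriv f) a"
    using holomorphic_on_imp_continuous_on[OF holomorphic_deriv[OF hol S]] a S
    by (simp add: continuous_on_eq_continuous_at)
  then obtain d1 where d1: "d1 > 0"
    and near1: "\<And>\<xi>. dist \<xi> a < d1 \<Longrightarrow> dist (deriv f \<xi>) (deriv f a) < e / 2"
    using e unfolding continuous_at_eps_delta by (meson half_gt_zero)
  obtain d2 where d2: "d2 > 0" "ball a d2 \<subseteq> S"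
    using S a open_contains_ball by blast
  define d where "d = min d1 d2"
  have d: "d > 0" "ball a d \<subseteq> S"
    using d1 d2 unfolding d_def by auto
  have near: "cmod (deriv f \<xi> - deriv f a) \<le> e / 2" if "\<xi> \<in> ball a d" for \<xi>
    using near1[of \<xi>] that unfolding d_def by (simp add: dist_norm norm_minus_commute)
  show "\<exists>d>0. \<forall>p. dist p (a, a) < d \<longrightarrow>
      dist (diff_quot f (fst p) (snd p)) (diff_quot f (fst (a, a)) (snd (a, a))) < e"
  proof (intro exI[of _ d] conjI allI impI d)
    fix p :: "complex \<times> complex" assume "dist p (a, a) < d"
    then have "fst p \<in> ball a d" "snd p \<in> ball a d"
      using dist_fst_le[of p "(a, a)"] dist_snd_le[of p "(a, a)"] by (auto simp: dist_commute)
    then have "cmod (diff_quot f (fst p) (snd p) - deriv f a) \<le> e / 2"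
      using norm_diff_quot_minus_le[OF hol S convex_ball d(2) near] by blast
    then show "dist (diff_quot f (fst p) (snd p)) (diff_quot f (fst (a, a)) (snd (a, a))) < e"
      using e by (simp add: diff_quot_def dist_norm)
  qed
qed

lemma continuous_on_diff_quot:
  assumes hol: "f holomorphic_on S" and S: "open S"
  shows "continuous_on (S \<times> S) (\<lambda>p. diff_quot f (fst p) (snd p))"
  unfolding continuous_on_eq_continuous_at[OF open_Times[OF S S]]
proof safe
  fix a b assume a: "a \<in> S" and b: "b \<in> S"
  show "isCont (\<lambda>p. diff_quot f (fst p) (snd p)) (a, b)"
  proof (cases "a = b")
    case False
    have f: "isCont f x" if "x \<in> S" for x
      using holomorphic_on_imp_continuous_on[OF hol] continuous_on_eq_continuous_at[OF S] that
      by blast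
    have lfst: "((\<lambda>p. fst p) \<longlongrightarrow> a) (at (a, b))" and lsnd: "((\<lambda>p. snd p) \<longlongrightarrow> b) (at (a, b))"
      using tendsto_fst[OF tendsto_ident_at] tendsto_snd[OF tendsto_ident_at] by auto
    have "((\<lambda>p. (f (fst p) - f (snd p)) / (fst p - snd p)) \<longlongrightarrow> (f a - f b) / (a - b)) (at (a, b))"
      using False
      by (intro tendsto_intros isCont_tendsto_compose[OF f] lfst lsnd a b) auto
    moreover have "\<forall>\<^sub>F p in at (a, b). fst p - snd p \<noteq> 0"
      using False by (intro tendsto_imp_eventually_ne[of _ "a - b"] tendsto_intros lfst lsnd) auto
    then have "\<forall>\<^sub>F p in at (a, b).
        (f (fst p) - f (snd p)) / (fst p - snd p) = diff_quot f (fst p) (snd p)"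
      by eventually_elim (simp add: diff_quot_def)
    ultimately show ?thesis
      unfolding isCont_def using False by (simp add: diff_quot_def Lim_transform_eventually)
  qed (use isCont_diff_quot_diagonal[OF hol S a] in simp)
qed

definition boundary_diff_quot :: "(complex \<Rightarrow> complex) \<Rightarrow> complex \<Rightarrow> complex \<Rightarrow> complex" where
  "boundary_diff_quot \<phi> \<sigma> w = (\<sigma> - \<phi> w) / (\<sigma> - w)"

lemma diff_quot_tendsto_boundary:
  assumes "(\<phi> \<longlongrightarrow> \<sigma>) (at \<sigma> within T)" and "w \<noteq> \<sigma>"
  shows "((\<lambda>z. diff_quot \<phi> z w) \<longlongrightarrow> boundary_diff_quot \<phi> \<sigma> w) (at \<sigma> within T)"
proof -
  have "((\<lambda>z. (\<phi> z - \<phi> w) / (z - w)) \<longlongrightarrow> boundary_diff_quot \<phi> \<sigma> w) (at \<sigma> within T)"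
    unfolding boundary_diff_quot_def using assms by (intro tendsto_intros) auto
  moreover have "\<forall>\<^sub>F z in at \<sigma> within T. z \<noteq> w"
    using assms(2) by (intro tendsto_imp_eventually_ne[OF tendsto_ident_at]) auto
  then have "\<forall>\<^sub>F z in at \<sigma> within T. (\<phi> z - \<phi> w) / (z - w) = diff_quot \<phi> z w"
    by eventually_elim (simp add: diff_quot_def)
  ultimately show ?thesis by (rule Lim_transform_eventually)
qed

lemma diff_quot_tendsto_boundary_pair:
  assumes lim1: "(\<phi> \<longlongrightarrow> \<sigma>) (at \<sigma> within S1)" and lim2: "(\<phi> \<longlongrightarrow> \<sigma>') (at \<sigma>' within S2)"
    and "\<sigma> \<notin> S1" "\<sigma>' \<notin> S2" "\<sigma> \<noteq> \<sigma>'"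
  shows "((\<lambda>p. diff_quot \<phi> (fst p) (snd p)) \<longlongrightarrow> 1) (at (\<sigma>, \<sigma>') within S1 \<times> S2)"
proof -
  define F where "F = at (\<sigma>, \<sigma>') within S1 \<times> S2"
  have fst: "((\<lambda>p. fst p) \<longlongrightarrow> \<sigma>) F" and snd: "((\<lambda>p. snd p) \<longlongrightarrow> \<sigma>') F"
    unfolding F_def using tendsto_fst[OF tendsto_ident_at] tendsto_snd[OF tendsto_ident_at] by auto
  have "\<forall>\<^sub>F p in F. fst p \<in> S1 - {\<sigma>}" "\<forall>\<^sub>F p in F. snd p \<in> S2 - {\<sigma>'}"
    using eventually_at_within_mem[of "S1 \<times> S2" "(\<sigma>, \<sigma>')"] assms(3,4) unfolding F_def
    by (auto elim: eventually_mono)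
  then have "((\<lambda>p. \<phi> (fst p)) \<longlongrightarrow> \<sigma>) F" "((\<lambda>p. \<phi> (snd p)) \<longlongrightarrow> \<sigma>') F"
    using filterlim_compose[OF lim1 filterlim_at_withinI[OF fst]]
      filterlim_compose[OF lim2 filterlim_at_withinI[OF snd]] by auto
  then have "((\<lambda>p. (\<phi> (fst p) - \<phi> (snd p)) / (fst p - snd p)) \<longlongrightarrow> (\<sigma> - \<sigma>') / (\<sigma> - \<sigma>')) F"
    using assms(5) by (intro tendsto_intros fst snd) auto
  moreover have "\<forall>\<^sub>F p in F. fst p - snd p \<noteq> 0"
    using assms(5) by (intro tendsto_imp_eventually_ne[of _ "\<sigma> - \<sigma>'"] tendsto_intros fst snd) auto
  then have "\<forall>\<^sub>F p in F. (\<phi> (fst p) - \<phi> (snd p)) / (fst p - snd p) = diff_quot \<phi> (fst p) (snd p)"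
    by eventually_elim (simp add: diff_quot_def)
  ultimately show ?thesis
    unfolding F_def using assms(5) by (simp add: Lim_transform_eventually)
qed

lemma boundary_diff_quot_not_nonpos:
  assumes \<sigma>: "cmod \<sigma> = 1" and a: "cmod (\<phi> w) < 1" and b: "cmod w < 1"
  shows "boundary_diff_quot \<phi> \<sigma> w \<notin> \<real>\<^sub>\<le>\<^sub>0"
proof
  assume nonpos: "boundary_diff_quot \<phi> \<sigma> w \<in> \<real>\<^sub>\<le>\<^sub>0"
  have sc: "cnj \<sigma> * \<sigma> = 1" using \<sigma> by (metis complex_norm_square mult.commute of_real_1 power_one)
  have Re_pos: "Re (1 - cnj \<sigma> * c) > 0" if "cmod c < 1" for c
    using complex_Re_le_cmod[of "cnj \<sigma> * c"] that \<sigma> by (simp add: norm_mult)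
  define u where "u = 1 - cnj \<sigma> * \<phi> w"
  define v where "v = 1 - cnj \<sigma> * w"
  have u: "Re u > 0" and v: "Re v > 0" unfolding u_def v_def using Re_pos a b by auto
  have "\<sigma> - \<phi> w = \<sigma> * u" "\<sigma> - w = \<sigma> * v"
    unfolding u_def v_def using sc by (auto simp: algebra_simps)
  then have "boundary_diff_quot \<phi> \<sigma> w = u / v"
    unfolding boundary_diff_quot_def using \<sigma> by auto
  then have "u / v \<in> \<real>\<^sub>\<le>\<^sub>0" using nonpos by simp
  then have "Re (u / v) \<le> 0" "u / v = of_real (Re (u / v))"
    by (auto simp: complex_nonpos_Reals_iff intro: complex_eqI)
  then obtain x where "x \<le> 0" "u / v = of_real x" by blast
  moreover have "v \<noteq> 0" using v by auto
  ultimately have "u = of_real x * v" by (simp add: divide_eq_eq)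
  then have "Re u = x * Re v" by simp
  also have "\<dots> \<le> 0" using \<open>x \<le> 0\<close> v by (simp add: mult_nonpos_nonneg)
  finally show False using u by simp
qed

lemma diff_quot_div_boundary_diff_quot_minus_1:
  assumes "z \<noteq> w" "\<sigma> \<noteq> w" "\<phi> w \<noteq> \<sigma>"
  shows "diff_quot \<phi> z w / boundary_diff_quot \<phi> \<sigma> w - 1
    = ((\<phi> z - \<sigma>) * (\<sigma> - w) - (\<sigma> - \<phi> w) * (z - \<sigma>)) / ((z - w) * (\<sigma> - \<phi> w))"
proof -
  define P where "P = (\<phi> z - \<phi> w) * (\<sigma> - w)"
  define Q where "Q = (z - w) * (\<sigma> - \<phi> w)"
  have "Q \<noteq> 0" unfolding Q_def using assms by simp
  have "diff_quot \<phi> z w / boundary_diff_quot \<phi> \<sigma> w = P / Q"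
    unfolding diff_quot_def boundary_diff_quot_def P_def Q_def using assms(1)
    by (simp add: divide_divide_times_eq)
  also have "\<dots> - 1 = (P - Q) / Q"
    using \<open>Q \<noteq> 0\<close> by (simp add: diff_divide_distrib)
  also have "P - Q = (\<phi> z - \<sigma>) * (\<sigma> - w) - (\<sigma> - \<phi> w) * (z - \<sigma>)"
    unfolding P_def Q_def by (simp add: algebra_simps)
  finally show ?thesis unfolding Q_def .
qed

lemma diff_quot_near_boundary_diff_quot_estimate:
  assumes z: "cmod (z - \<sigma>) < \<eta>" "cmod (\<phi> z - \<sigma>) < \<eta>"
    and w: "A \<le> cmod (\<sigma> - w)" "B \<le> cmod (\<sigma> - \<phi> w)" "cmod (\<sigma> - w) \<le> 2" "cmod (\<sigma> - \<phi> w) \<le> 2"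
    and \<eta>: "A > 0" "B > 0" "2 * \<eta> \<le> A" "16 * \<eta> \<le> A * B"
  shows "z \<noteq> w" and "cmod (diff_quot \<phi> z w / boundary_diff_quot \<phi> \<sigma> w - 1) \<le> 1/2"
proof -
  have \<eta>0: "0 \<le> \<eta>" using z(1) norm_ge_zero[of "z - \<sigma>"] by linarith
  have "cmod (\<sigma> - w) \<le> cmod (z - w) + cmod (z - \<sigma>)"
    using norm_triangle_ineq4[of "z - w" "z - \<sigma>"] by simp
  then have zw: "A / 2 \<le> cmod (z - w)" using w(1) z \<eta> by linarith
  then show "z \<noteq> w" using \<eta> by auto
  have "cmod ((\<phi> z - \<sigma>) * (\<sigma> - w) - (\<sigma> - \<phi> w) * (z - \<sigma>))
        \<le> cmod (\<phi> z - \<sigma>) * cmod (\<sigma> - w) + cmod (\<sigma> - \<phi> w) * cmod (z - \<sigma>)"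
    using norm_triangle_ineq4[of "(\<phi> z - \<sigma>) * (\<sigma> - w)" "(\<sigma> - \<phi> w) * (z - \<sigma>)"]
    by (simp add: norm_mult)
  also have "\<dots> \<le> \<eta> * 2 + 2 * \<eta>"
    using z w \<eta>0 by (intro add_mono mult_mono) auto
  finally have num: "cmod ((\<phi> z - \<sigma>) * (\<sigma> - w) - (\<sigma> - \<phi> w) * (z - \<sigma>)) \<le> 4 * \<eta>"
    by simp
  have den: "A / 2 * B \<le> cmod ((z - w) * (\<sigma> - \<phi> w))"
    unfolding norm_mult using zw w(2) \<eta> by (intro mult_mono) auto
  have "\<sigma> \<noteq> w" "\<phi> w \<noteq> \<sigma>" "z \<noteq> w" using w(1,2) \<eta> zw by auto
  then have "cmod (diff_quot \<phi> z w / boundary_diff_quot \<phi> \<sigma> w - 1)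
      = cmod ((\<phi> z - \<sigma>) * (\<sigma> - w) - (\<sigma> - \<phi> w) * (z - \<sigma>)) / cmod ((z - w) * (\<sigma> - \<phi> w))"
    by (simp add: diff_quot_div_boundary_diff_quot_minus_1 norm_divide)
  also have "\<dots> \<le> (4 * \<eta>) / (A / 2 * B)"
    using num den \<eta> \<eta>0 by (intro frac_le) auto
  also have "\<dots> \<le> 1/2"
    using \<eta> by (subst pos_divide_le_eq) auto
  finally show "cmod (diff_quot \<phi> z w / boundary_diff_quot \<phi> \<sigma> w - 1) \<le> 1/2" .
qed

lemma diff_quot_near_boundary_diff_quot:
  assumes \<phi>D: "\<And>z. cmod z < 1 \<Longrightarrow> cmod (\<phi> z) < 1" and \<sigma>: "cmod \<sigma> = 1"
    and lim: "(\<phi> \<longlongrightarrow> \<sigma>) (at \<sigma> within T)"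
    and S: "compact S" "S \<subseteq> ball 0 1" and cont: "continuous_on S \<phi>"
  shows "\<forall>\<^sub>F z in at \<sigma> within T. \<forall>w\<in>S.
           z \<noteq> w \<and> cmod (diff_quot \<phi> z w / boundary_diff_quot \<phi> \<sigma> w - 1) \<le> 1/2"
proof -
  obtain \<rho> where \<rho>: "\<rho> < 1" "S \<subseteq> cball 0 \<rho>"
    using compact_in_ball_obtain_cball[OF S] by blast
  have "\<phi> ` S \<subseteq> ball 0 1"
    using S(2) \<phi>D by (auto simp: subset_iff)
  then obtain \<rho>' where \<rho>': "\<rho>' < 1" "\<phi> ` S \<subseteq> cball 0 \<rho>'"
    using compact_in_ball_obtain_cball[OF compact_continuous_image[OF cont S(1)]] by blast
  define A where "A = 1 - \<rho>"
  define B where "B = 1 - \<rho>'"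
  define \<eta> where "\<eta> = min (A / 2) (A * B / 16)"
  have A: "A > 0" and B: "B > 0" unfolding A_def B_def using \<rho> \<rho>' by auto
  then have \<eta>: "\<eta> > 0" "2 * \<eta> \<le> A" "16 * \<eta> \<le> A * B" unfolding \<eta>_def by auto
  have w_bounds: "A \<le> cmod (\<sigma> - w)" "B \<le> cmod (\<sigma> - \<phi> w)"
    "cmod (\<sigma> - w) \<le> 2" "cmod (\<sigma> - \<phi> w) \<le> 2" if "w \<in> S" for w
  proof -
    have "cmod w \<le> \<rho>" "cmod (\<phi> w) \<le> \<rho>'" using that \<rho> \<rho>' by auto
    moreover have "cmod w < 1" "cmod (\<phi> w) < 1" using that S(2) \<phi>D by auto
    moreover note norm_triangle_ineq2[of \<sigma> w] norm_triangle_ineq2[of \<sigma> "\<phi> w"]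
      norm_triangle_ineq4[of \<sigma> w] norm_triangle_ineq4[of \<sigma> "\<phi> w"]
    ultimately show "A \<le> cmod (\<sigma> - w)" "B \<le> cmod (\<sigma> - \<phi> w)"
      "cmod (\<sigma> - w) \<le> 2" "cmod (\<sigma> - \<phi> w) \<le> 2"
      unfolding A_def B_def using \<sigma> by linarith+
  qed
  have "\<forall>\<^sub>F z in at \<sigma> within T. dist z \<sigma> < \<eta>" "\<forall>\<^sub>F z in at \<sigma> within T. dist (\<phi> z) \<sigma> < \<eta>"
    using tendstoD[OF tendsto_ident_at \<eta>(1)] tendstoD[OF lim \<eta>(1)] by auto
  then show ?thesis
  proof eventually_elim
    case (elim z)
    show ?case
    proof
      fix w assume "w \<in> S"
      from diff_quot_near_boundary_diff_quot_estimate[where \<phi> = \<phi>, OF _ _ w_bounds[OF this] A B \<eta>(2,3)] elim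
      show "z \<noteq> w \<and> cmod (diff_quot \<phi> z w / boundary_diff_quot \<phi> \<sigma> w - 1) \<le> 1/2"
        by (simp add: dist_norm)
    qed
  qed
qed

lemma dist_Pair_le_add:
  fixes a c :: "'a::real_normed_vector" and b d :: "'b::real_normed_vector"
  shows "dist (a, b) (c, d) \<le> dist a c + dist b d"
  using norm_Pair_le[of "a - c" "b - d"] by (simp add: dist_norm)

locale log_diff_quot =
  fixes \<phi> :: "complex \<Rightarrow> complex" and L :: "complex \<times> complex \<Rightarrow> complex"
  assumes holomorphic: "\<phi> holomorphic_on ball 0 1"
    and injective: "inj_on \<phi> (ball 0 1)"
    and self_map: "\<And>z. cmod z < 1 \<Longrightarrow> cmod (\<phi> z) < 1"
    and continuous: "continuous_on (ball 0 1 \<times> ball 0 1) L"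
    and exp_L: "\<And>z w. z \<in> ball 0 1 \<Longrightarrow> w \<in> ball 0 1 \<Longrightarrow> exp (L (z, w)) = diff_quot \<phi> z w"
begin

lemma continuous_on_L_left:
  assumes "S \<subseteq> ball 0 1" "w \<in> ball 0 1"
  shows "continuous_on S (\<lambda>z. L (z, w))"
  using assms by (intro continuous_on_compose2[OF continuous]) (auto intro!: continuous_intros)

lemma continuous_on_L_right:
  assumes "S \<subseteq> ball 0 1" "z \<in> ball 0 1"
  shows "continuous_on S (\<lambda>w. L (z, w))"
  using assms by (intro continuous_on_compose2[OF continuous]) (auto intro!: continuous_intros)

lemma L_commute:
  assumes "z \<in> ball 0 1" "w \<in> ball 0 1"
  shows "L (w, z) = L (z, w)"
proof -
  define D where "D = ball (0::complex) 1 \<times> ball (0::complex) 1"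
  have swap: "prod.swap ` D \<subseteq> D" unfolding D_def by auto
  have conn: "connected D" unfolding D_def by (intro convex_connected convex_Times) auto
  have cont: "continuous_on D L" using continuous unfolding D_def .
  have cont_swap: "continuous_on D (\<lambda>p. L (prod.swap p))"
    using continuous_on_compose2[OF cont continuous_on_swap swap] by simp
  have "exp (L (prod.swap p)) = exp (L p)" if "p \<in> D" for p
    using that exp_L diff_quot_commute unfolding D_def by (cases p) auto
  then obtain n :: int where n: "\<And>p. p \<in> D \<Longrightarrow> L (prod.swap p) - L p = 2 * pi * \<i> * of_int n"
    using continuous_logs_differ_by_constant[OF conn cont_swap cont] by blast
  have "(0, 0) \<in> D" unfolding D_def by simp
  then have "n = 0" using n[of "(0, 0)"] by simp
  then show ?thesis using n[of "(z, w)"] assms unfolding D_def by simp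
qed

lemma L_tendsto_boundary:
  assumes \<tau>: "\<tau> \<in> ball 0 1" "\<phi> \<tau> = \<tau>" and \<sigma>: "cmod \<sigma> = 1" and lim: "has_angular_limit \<phi> \<sigma> \<sigma>"
  obtains c where "exp c = 1" and "has_angular_limit (\<lambda>z. L (z, \<tau>)) \<sigma> c"
proof -
  have stolz_limit: "\<exists>n::int. ((\<lambda>z. L (z, \<tau>)) \<longlongrightarrow> 2 * pi * \<i> * of_int n) (at \<sigma> within stolz \<sigma> C)"
    if C: "C > 1" for C
  proof -
    have "(\<phi> \<longlongrightarrow> \<sigma>) (at \<sigma> within stolz \<sigma> C)"
      using lim C unfolding has_angular_limit_def by simp
    moreover have "\<tau> \<noteq> \<sigma>" using \<sigma> \<tau> by auto
    ultimately have "((\<lambda>z. diff_quot \<phi> z \<tau>) \<longlongrightarrow> boundary_diff_quot \<phi> \<sigma> \<tau>) (at \<sigma> within stolz \<sigma> C)"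
      by (rule diff_quot_tendsto_boundary)
    moreover have "boundary_diff_quot \<phi> \<sigma> \<tau> = 1"
      using \<sigma> \<tau> by (auto simp: boundary_diff_quot_def)
    moreover have "\<forall>\<^sub>F z in at \<sigma> within stolz \<sigma> C. diff_quot \<phi> z \<tau> = exp (L (z, \<tau>))"
      using eventually_at_within_mem[of "stolz \<sigma> C" \<sigma>]
    proof eventually_elim
      case (elim z)
      then have "z \<in> ball 0 1" using stolz_subset_ball by blast
      then show ?case using exp_L \<tau>(1) by simp
    qed
    ultimately have "((\<lambda>z. exp (L (z, \<tau>))) \<longlongrightarrow> 1) (at \<sigma> within stolz \<sigma> C)"
      by (simp add: Lim_transform_eventually)
    moreover have "convex (stolz \<sigma> C)" using C by (simp add: stolz_convex)
    ultimately obtain n :: int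
      where "((\<lambda>z. L (z, \<tau>)) \<longlongrightarrow> 2 * pi * \<i> * of_int n) (at \<sigma> within stolz \<sigma> C)"
      using continuous_log_tendsto_2pi_int[OF _ not_in_stolz[OF \<sigma>]
          continuous_on_L_left[OF stolz_subset_ball \<tau>(1)]] by blast
    then show ?thesis by blast
  qed
  have "\<exists>l. ((\<lambda>z. L (z, \<tau>)) \<longlongrightarrow> l) (at \<sigma> within stolz \<sigma> C)" if "C > 1" for C
    using stolz_limit[OF that] by blast
  then obtain c where c: "has_angular_limit (\<lambda>z. L (z, \<tau>)) \<sigma> c"
    by (rule has_angular_limitI_stolz_limits[OF \<sigma>])
  obtain n :: int where "((\<lambda>z. L (z, \<tau>)) \<longlongrightarrow> 2 * pi * \<i> * of_int n) (at \<sigma> within stolz \<sigma> 2)"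
    using stolz_limit[of 2] by auto
  moreover have "((\<lambda>z. L (z, \<tau>)) \<longlongrightarrow> c) (at \<sigma> within stolz \<sigma> 2)"
    using c unfolding has_angular_limit_def by simp
  ultimately have "c = 2 * pi * \<i> * of_int n"
    using tendsto_unique[OF at_stolz_neq_bot[OF \<sigma>, of 2]] by simp
  then have "exp c = 1" by (simp add: exp_eq_1)
  then show ?thesis using c by (rule that)
qed

lemma continuous_on_boundary_diff_quot:
  assumes "cmod \<sigma> = 1" "S \<subseteq> ball 0 1"
  shows "continuous_on S (boundary_diff_quot \<phi> \<sigma>)"
proof -
  have "continuous_on S \<phi>"
    using holomorphic_on_imp_continuous_on[OF holomorphic] assms(2) continuous_on_subset by blast
  moreover have "\<sigma> \<noteq> w" if "w \<in> S" for w
    using that assms by auto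
  ultimately show ?thesis
    unfolding boundary_diff_quot_def by (intro continuous_intros) auto
qed

lemma boundary_diff_quot_nonzero:
  assumes "cmod \<sigma> = 1" "w \<in> ball 0 1"
  shows "boundary_diff_quot \<phi> \<sigma> w \<noteq> 0"
proof -
  have w: "cmod w < 1" using assms(2) by simp
  then show ?thesis
    using boundary_diff_quot_not_nonpos[of \<sigma> \<phi> w, OF assms(1) self_map[OF w] w]
    by (auto simp: complex_nonpos_Reals_iff)
qed

text \<open>As a function of \<open>w\<close>, the expression on either side is continuous with values in \<open>2\<pi>i\<int>\<close>, hence constant on
  \<open>S\<close>; the hypothesis keeps the quotient away from the branch cut of \<open>Ln\<close>.\<close>

lemma L_shift_second_variable:
  assumes \<sigma>: "cmod \<sigma> = 1" and z: "z \<in> ball 0 1"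
    and S: "connected S" "S \<subseteq> ball 0 1" "w1 \<in> S" "w2 \<in> S"
    and near: "\<And>w. w \<in> S \<Longrightarrow> cmod (diff_quot \<phi> z w / boundary_diff_quot \<phi> \<sigma> w - 1) < 1"
  shows "L (z, w1) - Ln (boundary_diff_quot \<phi> \<sigma> w1) - Ln (diff_quot \<phi> z w1 / boundary_diff_quot \<phi> \<sigma> w1)
       = L (z, w2) - Ln (boundary_diff_quot \<phi> \<sigma> w2) - Ln (diff_quot \<phi> z w2 / boundary_diff_quot \<phi> \<sigma> w2)"
proof -
  define h where "h = boundary_diff_quot \<phi> \<sigma>"
  define g where "g w = Ln (h w) + Ln (diff_quot \<phi> z w / h w)" for w
  have h: "h w \<notin> \<real>\<^sub>\<le>\<^sub>0" "h w \<noteq> 0" if "w \<in> S" for w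
  proof -
    have w: "cmod w < 1" using that S(2) by auto
    then show "h w \<notin> \<real>\<^sub>\<le>\<^sub>0" "h w \<noteq> 0"
      unfolding h_def using boundary_diff_quot_not_nonpos[of \<sigma> \<phi> w, OF \<sigma> self_map[OF w] w]
        boundary_diff_quot_nonzero[OF \<sigma>] by auto
  qed
  have "(\<lambda>w. (z, w)) ` S \<subseteq> ball 0 1 \<times> ball 0 1" using z S(2) by auto
  then have "continuous_on S (\<lambda>w. diff_quot \<phi> z w)"
    using continuous_on_compose2[OF continuous_on_diff_quot[OF holomorphic open_ball], of S "\<lambda>w. (z, w)"]
    by (simp add: continuous_on_Pair continuous_on_const continuous_on_id)
  then have cont_g: "continuous_on S g"
    unfolding g_def h_def using h near not_nonpos_Reals_if_near_1 S(2)
    by (intro continuous_intros continuous_on_boundary_diff_quot[OF \<sigma> S(2)]) (auto simp: h_def)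
  have "exp (L (z, w)) = exp (g w)" if "w \<in> S" for w
  proof -
    have "diff_quot \<phi> z w / h w \<noteq> 0" using near[OF that] unfolding h_def by auto
    then show ?thesis
      unfolding g_def using exp_L[OF z] that S(2) h by (auto simp: exp_add)
  qed
  then obtain n :: int where "\<And>w. w \<in> S \<Longrightarrow> L (z, w) - g w = 2 * pi * \<i> * of_int n"
    using continuous_logs_differ_by_constant[OF S(1) continuous_on_L_right[OF S(2) z] cont_g]
    by blast
  then have "L (z, w1) - g w1 = L (z, w2) - g w2"
    using S(3,4) by simp
  then show ?thesis
    unfolding g_def h_def by (simp add: algebra_simps)
qed

lemma L_tendsto_boundary_shift:
  assumes \<tau>: "\<tau> \<in> ball 0 1" "\<phi> \<tau> = \<tau>" and \<sigma>: "cmod \<sigma> = 1"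
    and T: "T \<subseteq> ball 0 1" and lim: "(\<phi> \<longlongrightarrow> \<sigma>) (at \<sigma> within T)"
    and c: "((\<lambda>z. L (z, \<tau>)) \<longlongrightarrow> c) (at \<sigma> within T)" and w0: "w0 \<in> ball 0 1"
  shows "((\<lambda>z. L (z, w0)) \<longlongrightarrow> c + Ln (boundary_diff_quot \<phi> \<sigma> w0)) (at \<sigma> within T)"
proof -
  define S where "S = closed_segment \<tau> w0"
  define h where "h = boundary_diff_quot \<phi> \<sigma>"
  have "S \<subseteq> ball 0 1"
    unfolding S_def using \<tau> w0 by (intro closed_segment_subset) auto
  then have S: "compact S" "S \<subseteq> ball 0 1" "connected S" "\<tau> \<in> S" "w0 \<in> S"
    unfolding S_def by auto
  have h_\<tau>: "h \<tau> = 1"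
    unfolding h_def boundary_diff_quot_def using \<sigma> \<tau> by auto
  have "\<forall>\<^sub>F z in at \<sigma> within T. \<forall>w\<in>S.
         z \<noteq> w \<and> cmod (diff_quot \<phi> z w / boundary_diff_quot \<phi> \<sigma> w - 1) \<le> 1/2"
    using self_map \<sigma> lim S(1,2) continuous_on_subset[OF holomorphic_on_imp_continuous_on[OF holomorphic] S(2)]
    by (rule diff_quot_near_boundary_diff_quot)
  then have key: "\<forall>\<^sub>F z in at \<sigma> within T. L (z, w0)
      = L (z, \<tau>) - Ln (diff_quot \<phi> z \<tau>) + Ln (h w0) + Ln (diff_quot \<phi> z w0 / h w0)"
    using eventually_at_within_mem[of T \<sigma>]
  proof eventually_elim
    case (elim z)
    have "z \<in> ball 0 1" using elim(2) T by blast
    from L_shift_second_variable[OF \<sigma> this S(3,2,5,4)] elim(1)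
    show ?case unfolding h_def using h_\<tau>[unfolded h_def] by (force simp: algebra_simps)
  qed
  have "\<tau> \<noteq> \<sigma>" "w0 \<noteq> \<sigma>" using \<tau> w0 \<sigma> by auto
  have l1: "((\<lambda>z. diff_quot \<phi> z \<tau>) \<longlongrightarrow> 1) (at \<sigma> within T)"
    using diff_quot_tendsto_boundary[OF lim \<open>\<tau> \<noteq> \<sigma>\<close>] h_\<tau> unfolding h_def by simp
  have "((\<lambda>z. diff_quot \<phi> z w0 / h w0) \<longlongrightarrow> h w0 / h w0) (at \<sigma> within T)"
    unfolding h_def
    by (rule tendsto_divide[OF diff_quot_tendsto_boundary[OF lim \<open>w0 \<noteq> \<sigma>\<close>] tendsto_const])
       (rule boundary_diff_quot_nonzero[OF \<sigma> w0])
  then have l2: "((\<lambda>z. diff_quot \<phi> z w0 / h w0) \<longlongrightarrow> 1) (at \<sigma> within T)"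
    using boundary_diff_quot_nonzero[OF \<sigma> w0] unfolding h_def by simp
  have "((\<lambda>z. L (z, \<tau>) - Ln (diff_quot \<phi> z \<tau>) + Ln (h w0) + Ln (diff_quot \<phi> z w0 / h w0))
      \<longlongrightarrow> c - Ln 1 + Ln (h w0) + Ln 1) (at \<sigma> within T)"
    by (intro tendsto_intros c l1 l2) auto
  with key show ?thesis
    unfolding h_def by (simp add: Lim_transform_eventually eq_commute[of "L _"])
qed

lemma L_limit_eq_if_eventually_Ln:
  assumes \<tau>: "\<tau> \<in> ball 0 1" "\<phi> \<tau> = \<tau>" and \<sigma>: "cmod \<sigma> = 1" and lim: "has_angular_limit \<phi> \<sigma> \<sigma>"
    and c: "((\<lambda>z. L (z, \<tau>)) \<longlongrightarrow> c) (at \<sigma> within stolz \<sigma> 2)" and w0: "w0 \<in> ball 0 1"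
    and ev: "\<forall>\<^sub>F z in at \<sigma> within stolz \<sigma> 2. L (z, w0) = a + Ln (diff_quot \<phi> z w0)"
  shows "c = a"
proof -
  have lim2: "(\<phi> \<longlongrightarrow> \<sigma>) (at \<sigma> within stolz \<sigma> 2)"
    using lim unfolding has_angular_limit_def by simp
  have "w0 \<noteq> \<sigma>" using w0 \<sigma> by auto
  have "boundary_diff_quot \<phi> \<sigma> w0 \<notin> \<real>\<^sub>\<le>\<^sub>0"
    using boundary_diff_quot_not_nonpos[OF \<sigma>] self_map w0 by simp
  then have "((\<lambda>z. a + Ln (diff_quot \<phi> z w0)) \<longlongrightarrow> a + Ln (boundary_diff_quot \<phi> \<sigma> w0))
      (at \<sigma> within stolz \<sigma> 2)"
    by (intro tendsto_intros diff_quot_tendsto_boundary[OF lim2 \<open>w0 \<noteq> \<sigma>\<close>])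
  then have "((\<lambda>z. L (z, w0)) \<longlongrightarrow> a + Ln (boundary_diff_quot \<phi> \<sigma> w0)) (at \<sigma> within stolz \<sigma> 2)"
    using ev by (simp add: Lim_transform_eventually eq_commute[of "L _"])
  moreover have "((\<lambda>z. L (z, w0)) \<longlongrightarrow> c + Ln (boundary_diff_quot \<phi> \<sigma> w0)) (at \<sigma> within stolz \<sigma> 2)"
    by (rule L_tendsto_boundary_shift[OF \<tau> \<sigma> stolz_subset_ball lim2 c w0])
  ultimately show ?thesis
    using tendsto_unique[OF at_stolz_neq_bot[OF \<sigma>, of 2]] by fastforce
qed

lemma L_eq_Ln_near_boundary_pair:
  assumes \<sigma>: "cmod \<sigma> = 1" and \<sigma>': "cmod \<sigma>' = 1" and ne: "\<sigma> \<noteq> \<sigma>'"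
    and lim: "has_angular_limit \<phi> \<sigma> \<sigma>" and lim': "has_angular_limit \<phi> \<sigma>' \<sigma>'"
  obtains \<delta> and n :: int where "\<delta> > 0"
    and "\<And>z w. z \<in> stolz \<sigma> 2 \<Longrightarrow> w \<in> stolz \<sigma>' 2 \<Longrightarrow> dist z \<sigma> < \<delta> \<Longrightarrow> dist w \<sigma>' < \<delta> \<Longrightarrow>
           L (z, w) = 2 * pi * \<i> * of_int n + Ln (diff_quot \<phi> z w)"
proof -
  define W where "W = stolz \<sigma> 2 \<times> stolz \<sigma>' 2"
  have W: "W \<subseteq> ball 0 1 \<times> ball 0 1" unfolding W_def using stolz_subset_ball by blast
  have "((\<lambda>p. diff_quot \<phi> (fst p) (snd p)) \<longlongrightarrow> 1) (at (\<sigma>, \<sigma>') within W)"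
    unfolding W_def using lim lim' ne not_in_stolz[OF \<sigma>] not_in_stolz[OF \<sigma>']
    by (intro diff_quot_tendsto_boundary_pair) (auto simp: has_angular_limit_def)
  moreover have "\<forall>\<^sub>F p in at (\<sigma>, \<sigma>') within W. diff_quot \<phi> (fst p) (snd p) = exp (L p)"
    using eventually_at_within_mem[of W] by eventually_elim (use W exp_L in auto)
  ultimately have "((\<lambda>p. exp (L p)) \<longlongrightarrow> 1) (at (\<sigma>, \<sigma>') within W)"
    by (simp add: Lim_transform_eventually)
  moreover have "convex W" unfolding W_def by (intro convex_Times stolz_convex) auto
  moreover have "(\<sigma>, \<sigma>') \<notin> W" unfolding W_def using not_in_stolz[OF \<sigma>] by auto
  ultimately obtain \<delta> and n :: int where \<delta>: "\<delta> > 0"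
    and n: "\<And>p. p \<in> W \<Longrightarrow> dist p (\<sigma>, \<sigma>') < \<delta> \<Longrightarrow> L p - Ln (exp (L p)) = 2 * pi * \<i> * of_int n"
    using continuous_log_eq_Ln_near continuous_on_subset[OF continuous W] by metis
  show ?thesis
  proof
    show "\<delta> / 2 > 0" using \<delta> by simp
    fix z w assume zw: "z \<in> stolz \<sigma> 2" "w \<in> stolz \<sigma>' 2" "dist z \<sigma> < \<delta> / 2" "dist w \<sigma>' < \<delta> / 2"
    then have "dist (z, w) (\<sigma>, \<sigma>') < \<delta>"
      using dist_Pair_le_add[of z w \<sigma> \<sigma>'] by linarith
    then show "L (z, w) = 2 * pi * \<i> * of_int n + Ln (diff_quot \<phi> z w)"
      using n[of "(z, w)"] zw exp_L W unfolding W_def by (auto simp: algebra_simps)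
  qed
qed

text \<open>Near a pair \<open>(\<sigma>, \<sigma>')\<close> of distinct boundary fixed points the difference quotient tends
  to \<open>(\<sigma> - \<sigma>') / (\<sigma> - \<sigma>') = 1\<close>, so there \<open>L\<close> is a single branch \<open>2\<pi>in + Ln\<close>; testing this at
  points near \<open>\<sigma>'\<close> and near \<open>\<sigma>\<close> identifies both boundary limits with \<open>2\<pi>in\<close>.\<close>

lemma L_boundary_limits_eq:
  assumes \<tau>: "\<tau> \<in> ball 0 1" "\<phi> \<tau> = \<tau>"
    and \<sigma>: "cmod \<sigma> = 1" and \<sigma>': "cmod \<sigma>' = 1" and ne: "\<sigma> \<noteq> \<sigma>'"
    and lim: "has_angular_limit \<phi> \<sigma> \<sigma>" and lim': "has_angular_limit \<phi> \<sigma>' \<sigma>'"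
    and c: "((\<lambda>z. L (z, \<tau>)) \<longlongrightarrow> c) (at \<sigma> within stolz \<sigma> 2)"
    and c': "((\<lambda>z. L (z, \<tau>)) \<longlongrightarrow> c') (at \<sigma>' within stolz \<sigma>' 2)"
  shows "c = c'"
proof -
  obtain \<delta> and n :: int where \<delta>: "\<delta> > 0"
    and L_near: "\<And>z w. z \<in> stolz \<sigma> 2 \<Longrightarrow> w \<in> stolz \<sigma>' 2 \<Longrightarrow> dist z \<sigma> < \<delta> \<Longrightarrow> dist w \<sigma>' < \<delta> \<Longrightarrow>
      L (z, w) = 2 * pi * \<i> * of_int n + Ln (diff_quot \<phi> z w)"
    using L_eq_Ln_near_boundary_pair[OF \<sigma> \<sigma>' ne lim lim'] by blast
  define r where "r = max (1/2) (1 - \<delta> / 2)"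
  have "1 - \<delta> / 2 \<le> r" "1/2 \<le> r" unfolding r_def by auto
  moreover have "r < 1" unfolding r_def using \<delta> by auto
  ultimately have r: "0 \<le> r" "r < 1" "1 - r < \<delta>" using \<delta> by linarith+
  have radial: "of_real r * \<zeta> \<in> stolz \<zeta> 2" "dist (of_real r * \<zeta>) \<zeta> < \<delta>" if "cmod \<zeta> = 1" for \<zeta>
    using radial_in_stolz[OF that r(1,2)] norm_radial_diff[OF that, of r] r
    by (simp_all add: dist_norm norm_minus_commute)
  define z0 where "z0 = of_real r * \<sigma>"
  define w0 where "w0 = of_real r * \<sigma>'"
  have z0: "z0 \<in> stolz \<sigma> 2" "dist z0 \<sigma> < \<delta>" "z0 \<in> ball 0 1"
    and w0: "w0 \<in> stolz \<sigma>' 2" "dist w0 \<sigma>' < \<delta>" "w0 \<in> ball 0 1"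
    unfolding z0_def w0_def using radial[OF \<sigma>] radial[OF \<sigma>'] stolz_subset_ball by blast+
  have near: "\<forall>\<^sub>F z in at \<zeta> within stolz \<zeta> 2. z \<in> stolz \<zeta> 2 \<and> dist z \<zeta> < \<delta>" for \<zeta>
    by (rule eventually_conj[OF eventually_at_within_mem tendstoD[OF tendsto_ident_at \<delta>]])
  have "\<forall>\<^sub>F z in at \<sigma> within stolz \<sigma> 2. L (z, w0) = 2 * pi * \<i> * of_int n + Ln (diff_quot \<phi> z w0)"
    using near[of \<sigma>] by eventually_elim (use L_near w0 in blast)
  then have c_eq: "c = 2 * pi * \<i> * of_int n"
    by (rule L_limit_eq_if_eventually_Ln[OF \<tau> \<sigma> lim c w0(3)])
  have "\<forall>\<^sub>F w in at \<sigma>' within stolz \<sigma>' 2. L (w, z0) = 2 * pi * \<i> * of_int n + Ln (diff_quot \<phi> w z0)"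
    using near[of \<sigma>']
  proof eventually_elim
    case (elim w)
    then have "w \<in> ball 0 1" using stolz_subset_ball by blast
    then show ?case
      using L_near[of z0 w] elim z0 L_commute diff_quot_commute by metis
  qed
  then have "c' = 2 * pi * \<i> * of_int n"
    by (rule L_limit_eq_if_eventually_Ln[OF \<tau> \<sigma>' lim' c' z0(3)])
  with c_eq show ?thesis by simp
qed

lemma holomorphic_on_L_left:
  assumes \<tau>: "\<tau> \<in> ball 0 1"
  shows "(\<lambda>z. L (z, \<tau>)) holomorphic_on ball 0 1"
proof -
  have "(\<lambda>z. if z = \<tau> then deriv \<phi> \<tau> else (\<phi> z - \<phi> \<tau>) / (z - \<tau>)) holomorphic_on ball 0 1"
    using \<tau> by (intro pole_lemma[OF holomorphic]) simp
  then have hol: "(\<lambda>z. diff_quot \<phi> z \<tau>) holomorphic_on ball 0 1"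
    by (rule holomorphic_transform) (simp add: diff_quot_def)
  obtain g where g: "g holomorphic_on ball 0 1" and exp_g: "\<And>z. z \<in> ball 0 1 \<Longrightarrow> exp (g z) = diff_quot \<phi> z \<tau>"
    using holomorphic_logarithm_exists[OF convex_ball open_ball hol _ \<tau>]
      diff_quot_nonzero[OF holomorphic open_ball injective _ \<tau>] by blast
  have "exp (g z) = exp (L (z, \<tau>))" if "z \<in> ball 0 1" for z
    using exp_g exp_L \<tau> that by simp
  then obtain n :: int where n: "\<And>z. z \<in> ball 0 1 \<Longrightarrow> g z - L (z, \<tau>) = 2 * pi * \<i> * of_int n"
    using continuous_logs_differ_by_constant[OF convex_connected[OF convex_ball]
        holomorphic_on_imp_continuous_on[OF g] continuous_on_L_left[OF _ \<tau>]] by blast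
  have "(\<lambda>z. g z - 2 * pi * \<i> * of_int n) holomorphic_on ball 0 1"
    by (intro holomorphic_intros g)
  then show ?thesis
    by (rule holomorphic_transform) (use n in \<open>simp add: algebra_simps\<close>)
qed

end

lemma log_diff_quot_exists:
  assumes hol: "\<phi> holomorphic_on ball 0 1" and inj: "inj_on \<phi> (ball 0 1)"
    and self_map: "\<And>z. cmod z < 1 \<Longrightarrow> cmod (\<phi> z) < 1"
  obtains L where "log_diff_quot \<phi> L"
proof -
  have "simply_connected (ball (0::complex) 1 \<times> ball (0::complex) 1)"
    using convex_Times[OF convex_ball convex_ball] by (rule convex_imp_simply_connected)
  moreover have "locally path_connected (ball (0::complex) 1 \<times> ball (0::complex) 1)"
    by (intro open_imp_locally_path_connected open_Times) auto
  moreover have "diff_quot \<phi> (fst p) (snd p) \<noteq> 0" if "p \<in> ball 0 1 \<times> ball 0 1" for p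
    using that diff_quot_nonzero[OF hol open_ball inj] by (cases p) simp
  ultimately obtain L where L: "continuous_on (ball 0 1 \<times> ball 0 1) L"
    and exp_L: "\<And>p. p \<in> ball 0 1 \<times> ball 0 1 \<Longrightarrow> diff_quot \<phi> (fst p) (snd p) = exp (L p)"
    using continuous_logarithm_on_simply_connected[OF continuous_on_diff_quot[OF hol open_ball]]
    by blast
  have "log_diff_quot \<phi> L"
  proof
    show "exp (L (z, w)) = diff_quot \<phi> z w" if "z \<in> ball 0 1" "w \<in> ball 0 1" for z w
      using exp_L[of "(z, w)"] that by simp
  qed (use assms L in auto)
  then show ?thesis by (rule that)
qed

lemma log_branch_vanishing_at_boundary_fixpoints:
  assumes \<tau>: "\<tau> \<in> ball 0 1" and F: "F \<subseteq> sphere 0 1" and \<phi>: "\<phi> \<in> U_int_F \<tau> F"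
  shows "\<exists>\<Psi>. is_log_branch \<tau> \<phi> \<Psi> \<and> (\<forall>\<sigma>\<in>F. has_angular_limit \<Psi> \<sigma> 0)"
proof -
  note \<phi>D = U_int_FD[OF \<phi> \<tau>]
  obtain L where "log_diff_quot \<phi> L"
    using log_diff_quot_exists[OF \<phi>D(1-3)] by blast
  then interpret log_diff_quot \<phi> L .
  have boundary: "cmod \<sigma> = 1" "has_angular_limit \<phi> \<sigma> \<sigma>" if "\<sigma> \<in> F" for \<sigma>
    using that F \<phi>D(5) unfolding boundary_regular_fixpoint_def by auto
  have "\<exists>c. exp c = 1 \<and> has_angular_limit (\<lambda>z. L (z, \<tau>)) \<sigma> c" if "\<sigma> \<in> F" for \<sigma>
    using L_tendsto_boundary[OF \<tau> \<phi>D(4) boundary[OF that]] by blast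
  then obtain c where c: "\<And>\<sigma>. \<sigma> \<in> F \<Longrightarrow> exp (c \<sigma>) = 1 \<and> has_angular_limit (\<lambda>z. L (z, \<tau>)) \<sigma> (c \<sigma>)"
    by metis
  obtain c0 where c0: "exp c0 = 1" "\<And>\<sigma>. \<sigma> \<in> F \<Longrightarrow> c \<sigma> = c0"
  proof (cases "F = {}")
    case False
    then obtain \<sigma>1 where \<sigma>1: "\<sigma>1 \<in> F" by auto
    have "c \<sigma> = c \<sigma>1" if "\<sigma> \<in> F" for \<sigma>
    proof (cases "\<sigma> = \<sigma>1")
      case False
      have "((\<lambda>z. L (z, \<tau>)) \<longlongrightarrow> c \<zeta>) (at \<zeta> within stolz \<zeta> 2)" if "\<zeta> \<in> F" for \<zeta>
        using c[OF that] unfolding has_angular_limit_def by simp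
      then show ?thesis
        using L_boundary_limits_eq[OF \<tau> \<phi>D(4) boundary(1)[OF \<open>\<sigma> \<in> F\<close>] boundary(1)[OF \<sigma>1] False
            boundary(2)[OF \<open>\<sigma> \<in> F\<close>] boundary(2)[OF \<sigma>1]] that \<sigma>1 by blast
    qed simp
    then show ?thesis using that c \<sigma>1 by blast
  qed (use that[of 0] in simp)
  define \<Psi> where "\<Psi> z = L (z, \<tau>) - c0" for z
  have "is_log_branch \<tau> \<phi> \<Psi>"
    unfolding is_log_branch_def \<Psi>_def
    using holomorphic_on_L_left[OF \<tau>] exp_L[OF _ \<tau>] c0(1) \<phi>D(4)
    by (auto intro!: holomorphic_intros simp: exp_diff diff_quot_def)
  moreover have "has_angular_limit \<Psi> \<sigma> 0" if "\<sigma> \<in> F" for \<sigma>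
    using c[OF that] c0(2)[OF that] unfolding has_angular_limit_def \<Psi>_def
    by (auto intro: tendsto_eq_intros)
  ultimately show ?thesis by blast
qed

theorem lemma7p2:
  fixes \<tau> :: complex and F :: "complex set"
  assumes "\<tau> \<in> ball 0 1" and "finite F" and "F \<subseteq> sphere 0 1"
  shows "(\<forall>\<phi>\<in>U_int_F \<tau> F. \<exists>\<Psi>. is_log_branch \<tau> \<phi> \<Psi> \<and> (\<forall>\<sigma>\<in>F. has_angular_limit \<Psi> \<sigma> 0))
    \<and> (\<forall>(I :: real set) (\<phi> :: real \<Rightarrow> complex \<Rightarrow> complex) (\<Psi> :: real \<Rightarrow> complex \<Rightarrow> complex) \<sigma>0.
          is_interval I
        \<and> (\<forall>t\<in>I. \<phi> t \<in> U_int_F \<tau> F)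
        \<and> (\<forall>z\<in>ball 0 1. continuous_on I (\<lambda>t. \<phi> t z))
        \<and> \<sigma>0 \<in> F
        \<and> (\<forall>t\<in>I. \<exists>e>0. \<exists>M. \<forall>s\<in>I. \<bar>s - t\<bar> < e \<longrightarrow> cmod (angular_deriv (\<phi> s) \<sigma>0) \<le> M)
        \<and> (\<forall>t\<in>I. is_log_branch \<tau> (\<phi> t) (\<Psi> t) \<and> (\<forall>\<sigma>\<in>F. has_angular_limit (\<Psi> t) \<sigma> 0))
        \<longrightarrow> (\<forall>t0\<in>I. \<forall>K. compact K \<and> K \<subseteq> ball 0 1 \<longrightarrow>
               uniform_limit K \<Psi> (\<Psi> t0) (at t0 within I)))"
proof (intro conjI allI impI ballI)
  fix \<phi> assume "\<phi> \<in> U_int_F \<tau> F"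
  then show "\<exists>\<Psi>. is_log_branch \<tau> \<phi> \<Psi> \<and> (\<forall>\<sigma>\<in>F. has_angular_limit \<Psi> \<sigma> 0)"
    by (rule log_branch_vanishing_at_boundary_fixpoints[OF assms(1,3)])
next
  fix I :: "real set" and \<phi> \<Psi> :: "real \<Rightarrow> complex \<Rightarrow> complex" and \<sigma>0 t0 and K :: "complex set"
  assume "is_interval I
        \<and> (\<forall>t\<in>I. \<phi> t \<in> U_int_F \<tau> F)
        \<and> (\<forall>z\<in>ball 0 1. continuous_on I (\<lambda>t. \<phi> t z))
        \<and> \<sigma>0 \<in> F
        \<and> (\<forall>t\<in>I. \<exists>e>0. \<exists>M. \<forall>s\<in>I. \<bar>s - t\<bar> < e \<longrightarrow> cmod (angular_deriv (\<phi> s) \<sigma>0) \<le> M)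
        \<and> (\<forall>t\<in>I. is_log_branch \<tau> (\<phi> t) (\<Psi> t) \<and> (\<forall>\<sigma>\<in>F. has_angular_limit (\<Psi> t) \<sigma> 0))"
    and "t0 \<in> I" and "compact K \<and> K \<subseteq> ball 0 1"
  then show "uniform_limit K \<Psi> (\<Psi> t0) (at t0 within I)"
    by (intro uniform_limit_log_branch_family[OF assms(1,3), of I \<phi> \<sigma>0]) auto
qed

end
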